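(* Let $$F(t;x,y,w,u,z,v)=\sum_{s\in\mathcal{A},\,|s|>\mathsf{max}(s)}t^{|s|}x^{\mathsf{rep}(s)}y^{\mathsf{max}(s)}w^{\mathsf{ealm}(s)}u^{\mathsf{asc}(s)}z^{\mathsf{zero}(s)}v^{\mathsf{rmin}(s)}$$ and $r=t(u+x-xu)$. Then $$\Big(1-\frac{ry-1}{y(1-w)}\Big)F(t;x,y,w,u,z,v) =\frac{xyzvt^2\big(y^2tuwv(1-z)+z(y-yr+1)\big)}{(1-ytu)(1-ytuvw)(y-yzr+z)}-\frac{tx}{1-w}F(t;x,wy,1,u,z,v)$$ $$+(tux+y^{-1}-tu)\frac{wy(1-z)+z(y-yr+1)}{(1-w)(y-yzr+z)}F(t;x,y,1,u,z,v)$$ $$+\frac{y^2u^2vt^2z(1-v)(tux+y^{-1}-tu)}{1-ytu}\cdot\frac{y^2tuvw(1-z)+z(y-yr+1)}{(1-ytuvw)(y-yzr+z)}F(t;x,y,1,u,1,v).$$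
   Context: For a sequence $s=(s_1,\dots,s_n)$, $\mathsf{asc}(s)=|\{i\in[n-1]:s_i<s_{i+1}\}|$. An ascent sequence of length $n$ is a sequence of non-negative integers with $s_1=0$ and $s_i\le\mathsf{asc}(s_1,\dots,s_{i-1})+1$ for $2\le i\le n$; $\mathcal{A}$ is the set of all ascent sequences (all lengths $n\ge1$), $|s|$ the length. $\mathsf{rep}(s)=|s|-|\{s_1,\dots,s_n\}|$; $\mathsf{zero}(s)=|\{i:s_i=0\}|$; $\mathsf{max}(s)=|\{i:s_i=i-1\}|$; $\mathsf{rmin}(s)$ is the number of entries $s_i$ with $s_i<s_j$ for all $j>i$; $\mathsf{ealm}(s)=s_{\mathsf{max}(s)+1}$ when $\mathsf{max}(s)\ne|s|$. *)

theory Defs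
  imports "HOL-Computational_Algebra.Formal_Power_Series"
begin

text \<open>Sequences are nat lists, 0-indexed: paper's s_i is s ! (i-1).\<close>

definition asc :: "nat list \<Rightarrow> nat" where
  "asc s = card {i. Suc i < length s \<and> s ! i < s ! Suc i}"

definition ascent_seq :: "nat list \<Rightarrow> bool" where
  "ascent_seq s \<longleftrightarrow> s \<noteq> [] \<and> s ! 0 = 0 \<and>
     (\<forall>i. 1 \<le> i \<and> i < length s \<longrightarrow> s ! i \<le> asc (take i s) + 1)"

definition rep :: "nat list \<Rightarrow> nat" where
  "rep s = length s - card (set s)"

definition zero_st :: "nat list \<Rightarrow> nat" where
  "zero_st s = card {i. i < length s \<and> s ! i = 0}"

text \<open>max(s) = |{i : s_i = i-1}| (1-indexed), i.e. s ! j = j (0-indexed).\<close>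
definition max_st :: "nat list \<Rightarrow> nat" where
  "max_st s = card {i. i < length s \<and> s ! i = i}"

definition rmin :: "nat list \<Rightarrow> nat" where
  "rmin s = card {i. i < length s \<and> (\<forall>j. i < j \<and> j < length s \<longrightarrow> s ! i < s ! j)}"

text \<open>ealm(s) = s_{max(s)+1} (1-indexed) = s ! max(s) (0-indexed).\<close>
definition ealm :: "nat list \<Rightarrow> nat" where
  "ealm s = s ! max_st s"

text \<open>F(t;x,y,w,u,z,v) as a formal power series in t, for given parameter values.\<close>
definition Fgf :: "'a::field \<Rightarrow> 'a \<Rightarrow> 'a \<Rightarrow> 'a \<Rightarrow> 'a \<Rightarrow> 'a \<Rightarrow> 'a fps" where
  "Fgf x y w u z v = Abs_fps (\<lambda>n.
     \<Sum>s\<in>{s. ascent_seq s \<and> length s = n \<and> max_st s < length s}.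
        x ^ rep s * y ^ max_st s * w ^ ealm s * u ^ asc s * z ^ zero_st s * v ^ rmin s)"

end

theory Submission
  imports Defs
begin

text \<open>
  Write an ascent sequence \<open>s\<close> with \<open>max(s) < |s|\<close> as \<open>0, 1, ..., m - 1, e\<close> followed by a tail,
  where \<open>m = max(s)\<close> and \<open>e = ealm(s) < m\<close>. The weight of the tail depends only on the state
  reached after the prefix (ascent count, last letter, values used, values of the right-to-left
  minima), so \<open>F\<close> is a sum over \<open>m\<close> and \<open>e\<close> of monomials times generating functions of
  continuations of explicit states. The continuations after the last letters \<open>e\<close> and \<open>e - 1\<close>
  differ only in the letter \<open>e\<close> itself; this gives a linear relation between the series for
  \<open>(m, e - 1)\<close>, \<open>(m, e)\<close> and \<open>(m + 1, e)\<close>, the kernel-method step. Summed against \<open>w^e\<close> and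
  \<open>y^m\<close> it telescopes to a linear equation for \<open>F\<close> that also involves \<open>F\<close> at \<open>w = 1\<close>, at
  \<open>(wy, w = 1)\<close> and a few auxiliary series. Those satisfy equations of the same kind, and so do
  the specialisations \<open>w = 0\<close>, \<open>w = 1\<close>, \<open>z = 1\<close>; eliminating the auxiliary series is polynomial
  algebra.
\<close>

unbundle fps_syntax

section \<open>Continuations of a prefix\<close>

text \<open>
  A state \<open>(b, l, V, M)\<close> is what the continuations of a prefix need to know about it: the next
  letter is at most \<open>b = asc + 1\<close>, \<open>l\<close> is the last letter (\<open>-1\<close> before the first letter), \<open>V\<close> is
  the set of values used and \<open>M\<close> the set of values of the right-to-left minima.
\<close>

type_synonym state = "nat \<times> int \<times> nat set \<times> nat set"

fun bound :: "state \<Rightarrow> nat" where "bound (b, l, V, M) = b"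

fun minima :: "state \<Rightarrow> nat set" where "minima (b, l, V, M) = M"

fun step :: "state \<Rightarrow> nat \<Rightarrow> state" where
  "step (b, l, V, M) k =
     (if int k > l then Suc b else b, int k, insert k V, insert k {m \<in> M. m < k})"

fun step_weight :: "'a::field \<Rightarrow> 'a \<Rightarrow> 'a \<Rightarrow> state \<Rightarrow> nat \<Rightarrow> 'a" where
  "step_weight x u z (b, l, V, M) k =
     (if int k > l then u else 1) * (if k \<in> V then x else 1) * (if k = 0 then z else 1)"

definition letters :: "(nat \<Rightarrow> bool) \<Rightarrow> state \<Rightarrow> nat set" where
  "letters P \<sigma> = {k. k \<le> bound \<sigma> \<and> P k}"

lemma finite_letters [simp]: "finite (letters P \<sigma>)"
  unfolding letters_def by (rule finite_subset[of _ "{..bound \<sigma>}"]) auto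

fun ext_weight :: "'a::field \<Rightarrow> 'a \<Rightarrow> 'a \<Rightarrow> 'a \<Rightarrow> (nat \<Rightarrow> bool) \<Rightarrow> nat \<Rightarrow> state \<Rightarrow> 'a" where
  "ext_weight x u z v P 0 \<sigma> = v ^ card (minima \<sigma>)"
| "ext_weight x u z v P (Suc n) \<sigma> =
     (\<Sum>k\<in>letters P \<sigma>. step_weight x u z \<sigma> k * ext_weight x u z v P n (step \<sigma> k))"

lemma ext_weight_bisim:
  assumes "R \<sigma> \<tau>"
    and card_eq: "\<And>\<sigma> \<tau>. R \<sigma> \<tau> \<Longrightarrow> card (minima \<sigma>) = card (minima \<tau>)"
    and bij: "\<And>\<sigma> \<tau>. R \<sigma> \<tau> \<Longrightarrow> bij_betw (h \<sigma>) (letters P \<sigma>) (letters P' \<tau>)"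
    and step_rel: "\<And>\<sigma> \<tau> k. R \<sigma> \<tau> \<Longrightarrow> k \<in> letters P \<sigma> \<Longrightarrow>
       step_weight x u z \<sigma> k = step_weight x' u' z' \<tau> (h \<sigma> k) \<and> R (step \<sigma> k) (step \<tau> (h \<sigma> k))"
  shows "ext_weight x u z v P n \<sigma> = ext_weight x' u' z' v P' n \<tau>"
  using assms(1)
proof (induction n arbitrary: \<sigma> \<tau>)
  case 0
  then show ?case using card_eq by simp
next
  case (Suc n)
  have "ext_weight x' u' z' v P' (Suc n) \<tau> =
      (\<Sum>k\<in>letters P \<sigma>. step_weight x' u' z' \<tau> (h \<sigma> k) * ext_weight x' u' z' v P' n (step \<tau> (h \<sigma> k)))"
    using sum.reindex_bij_betw[OF bij[OF Suc.prems],
        of "\<lambda>j. step_weight x' u' z' \<tau> j * ext_weight x' u' z' v P' n (step \<tau> j)"]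
    by simp
  also have "\<dots> = ext_weight x u z v P (Suc n) \<sigma>"
    unfolding ext_weight.simps
  proof (rule sum.cong[OF refl])
    fix k assume "k \<in> letters P \<sigma>"
    then have "step_weight x u z \<sigma> k = step_weight x' u' z' \<tau> (h \<sigma> k)"
      and rel: "R (step \<sigma> k) (step \<tau> (h \<sigma> k))"
      using step_rel[OF Suc.prems] by auto
    then show "step_weight x' u' z' \<tau> (h \<sigma> k) * ext_weight x' u' z' v P' n (step \<tau> (h \<sigma> k)) =
        step_weight x u z \<sigma> k * ext_weight x u z v P n (step \<sigma> k)"
      using Suc.IH[OF rel] by simp
  qed
  finally show ?case by simp
qed

text \<open>A minimum \<open>a\<close> survives to the end exactly when all later letters exceed it.\<close>

lemma ext_weight_insert_minimum:
  assumes "finite M" "a \<notin> M"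
  shows "ext_weight x u z v P n (b, l, V, insert a M) =
    ext_weight x u z v P n (b, l, V, M) + (v - 1) * ext_weight x u z v (\<lambda>k. P k \<and> a < k) n (b, l, V, M)"
  using assms
proof (induction n arbitrary: b l V M)
  case 0
  then show ?case by (simp add: algebra_simps)
next
  case (Suc n)
  let ?\<sigma> = "(b, l, V, M)"
  let ?w = "step_weight x u z ?\<sigma>" and ?Q = "ext_weight x u z v P n"
    and ?Q' = "ext_weight x u z v (\<lambda>k. P k \<and> a < k) n"
  have pointwise: "?w k * ?Q (step (b, l, V, insert a M) k) =
      ?w k * ?Q (step ?\<sigma> k) + (if a < k then (v - 1) * (?w k * ?Q' (step ?\<sigma> k)) else 0)" for k
  proof (cases "a < k")
    case True
    obtain b' l' V' where st: "step ?\<sigma> k = (b', l', V', insert k {m \<in> M. m < k})" by simp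
    moreover have "step (b, l, V, insert a M) k = (b', l', V', insert a (insert k {m \<in> M. m < k}))"
      using st True by auto
    ultimately have "?Q (step (b, l, V, insert a M) k) = ?Q (step ?\<sigma> k) + (v - 1) * ?Q' (step ?\<sigma> k)"
      using True Suc.prems by (simp only:) (intro Suc.IH; auto)
    then show ?thesis using True by (simp only: if_P) (simp add: algebra_simps del: step.simps)
  next
    case False
    then have "insert k {m \<in> insert a M. m < k} = insert k {m \<in> M. m < k}" by auto
    then show ?thesis using False by simp
  qed
  have "letters (\<lambda>k. P k \<and> a < k) ?\<sigma> = {k \<in> letters P ?\<sigma>. a < k}"
    by (auto simp: letters_def)
  then have filter: "(\<Sum>k\<in>letters P ?\<sigma>. if a < k then (v - 1) * (?w k * ?Q' (step ?\<sigma> k)) else 0) =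
      (v - 1) * ext_weight x u z v (\<lambda>k. P k \<and> a < k) (Suc n) ?\<sigma>"
    by (simp only: sum.inter_filter[symmetric] finite_letters sum_distrib_left ext_weight.simps)
  have "ext_weight x u z v P (Suc n) (b, l, V, insert a M) =
      (\<Sum>k\<in>letters P ?\<sigma>. ?w k * ?Q (step (b, l, V, insert a M) k))"
    by (simp add: letters_def del: step.simps)
  also have "\<dots> = ext_weight x u z v P (Suc n) ?\<sigma> +
      (\<Sum>k\<in>letters P ?\<sigma>. if a < k then (v - 1) * (?w k * ?Q' (step ?\<sigma> k)) else 0)"
    by (simp only: pointwise sum.distrib ext_weight.simps)
  finally show ?case
    unfolding filter .
qed

lemma ext_weight_low_minima:
  assumes "\<And>k. P k \<Longrightarrow> c < k" "\<forall>m\<in>T. m \<le> c" "finite T" "finite M" "M \<inter> T = {}"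
  shows "ext_weight x u z v P n (b, l, V, M \<union> T) = v ^ card T * ext_weight x u z v P n (b, l, V, M)"
  using assms(4,5)
proof (induction n arbitrary: b l V M)
  case 0
  then show ?case using assms(3) by (simp add: card_Un_disjoint power_add)
next
  case (Suc n)
  let ?\<sigma> = "(b, l, V, M)" and ?Q = "ext_weight x u z v P n"
  have pointwise: "?Q (step (b, l, V, M \<union> T) k) = v ^ card T * ?Q (step ?\<sigma> k)"
    if "k \<in> letters P ?\<sigma>" for k
  proof -
    have "c < k" using that assms(1) by (auto simp: letters_def)
    obtain b' l' V' where st: "step ?\<sigma> k = (b', l', V', insert k {m \<in> M. m < k})" by simp
    moreover have "step (b, l, V, M \<union> T) k = (b', l', V', insert k {m \<in> M. m < k} \<union> T)"
      using st \<open>c < k\<close> assms(2) by force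
    moreover have "insert k {m \<in> M. m < k} \<inter> T = {}"
      using Suc.prems \<open>c < k\<close> assms(2) by force
    ultimately show ?thesis
      using Suc.prems by (simp only:) (intro Suc.IH; auto)
  qed
  have "ext_weight x u z v P (Suc n) (b, l, V, M \<union> T) =
      (\<Sum>k\<in>letters P ?\<sigma>. step_weight x u z ?\<sigma> k * ?Q (step (b, l, V, M \<union> T) k))"
    by (simp add: letters_def del: step.simps)
  also have "\<dots> = v ^ card T * ext_weight x u z v P (Suc n) ?\<sigma>"
    by (simp only: pointwise ext_weight.simps sum_distrib_left mult.left_commute cong: sum.cong)
  finally show ?case .
qed

text \<open>
  Marking \<open>g\<close> as used turns the first occurrence of \<open>g\<close> into a repetition and does not affect
  the continuations avoiding \<open>g\<close>.
\<close>

lemma ext_weight_mark_used: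
  assumes "g \<notin> V"
  shows "x * ext_weight x u z v P n (b, l, V, M) =
    ext_weight x u z v P n (b, l, insert g V, M) - (1 - x) * ext_weight x u z v (\<lambda>k. P k \<and> k \<noteq> g) n (b, l, insert g V, M)"
  using assms
proof (induction n arbitrary: b l V M)
  case 0
  then show ?case by (simp add: algebra_simps)
next
  case (Suc n)
  let ?\<sigma> = "(b, l, V, M)" and ?\<tau> = "(b, l, insert g V, M)"
  let ?w = "step_weight x u z ?\<tau>" and ?Q = "ext_weight x u z v P n"
    and ?Q' = "ext_weight x u z v (\<lambda>k. P k \<and> k \<noteq> g) n"
  have pointwise: "x * (step_weight x u z ?\<sigma> k * ?Q (step ?\<sigma> k)) =
      ?w k * ?Q (step ?\<tau> k) - (if k \<noteq> g then (1 - x) * (?w k * ?Q' (step ?\<tau> k)) else 0)" for k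
  proof (cases "k = g")
    case True
    then show ?thesis using Suc.prems by simp
  next
    case False
    obtain b' l' M' where "step ?\<sigma> k = (b', l', insert k V, M')" by simp
    moreover have "step ?\<tau> k = (b', l', insert g (insert k V), M')"
      using calculation by (auto simp: insert_commute)
    ultimately have "x * ?Q (step ?\<sigma> k) = ?Q (step ?\<tau> k) - (1 - x) * ?Q' (step ?\<tau> k)"
      using False Suc.prems by (simp only:) (intro Suc.IH; auto)
    moreover have "step_weight x u z ?\<sigma> k = ?w k" using False by simp
    ultimately have "x * (step_weight x u z ?\<sigma> k * ?Q (step ?\<sigma> k)) =
        ?w k * (?Q (step ?\<tau> k) - (1 - x) * ?Q' (step ?\<tau> k))"
      by (simp only: mult.left_commute[of x])
    then show ?thesis
      using False by (simp add: right_diff_distrib)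
  qed
  have "letters (\<lambda>k. P k \<and> k \<noteq> g) ?\<tau> = {k \<in> letters P ?\<sigma>. k \<noteq> g}"
    by (auto simp: letters_def)
  then have "(\<Sum>k\<in>letters P ?\<sigma>. if k \<noteq> g then (1 - x) * (?w k * ?Q' (step ?\<tau> k)) else 0) =
      (1 - x) * ext_weight x u z v (\<lambda>k. P k \<and> k \<noteq> g) (Suc n) ?\<tau>"
    by (simp only: sum.inter_filter[symmetric] finite_letters sum_distrib_left ext_weight.simps)
  moreover have "letters P ?\<tau> = letters P ?\<sigma>"
    by (simp add: letters_def)
  ultimately show ?case
    by (simp only: ext_weight.simps sum_distrib_left pointwise sum_subtractf)
qed

definition del_value :: "nat \<Rightarrow> nat \<Rightarrow> nat" where
  "del_value g k = (if g < k then k - 1 else k)"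

definition del_value_int :: "nat \<Rightarrow> int \<Rightarrow> int" where
  "del_value_int g l = (if int g < l then l - 1 else l)"

lemma del_value_less_iff: "a \<noteq> g \<Longrightarrow> b \<noteq> g \<Longrightarrow> del_value g a < del_value g b \<longleftrightarrow> a < b"
  by (auto simp: del_value_def split: if_splits)

lemma del_value_inj: "a \<noteq> g \<Longrightarrow> b \<noteq> g \<Longrightarrow> del_value g a = del_value g b \<Longrightarrow> a = b"
  by (auto simp: del_value_def split: if_splits)

lemma inj_on_del_value: "g \<notin> S \<Longrightarrow> inj_on (del_value g) S"
  using del_value_inj by (metis inj_onI)

lemma del_value_image_filter:
  assumes "g \<notin> S" "k \<noteq> g"
  shows "del_value g ` {s \<in> S. s < k} = {s \<in> del_value g ` S. s < del_value g k}"
proof (intro equalityI subsetI)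
  fix t assume "t \<in> del_value g ` {s \<in> S. s < k}"
  then obtain s where "s \<in> S" "s < k" "t = del_value g s" by blast
  then show "t \<in> {s \<in> del_value g ` S. s < del_value g k}"
    using assms del_value_less_iff[of s g k] by auto
next
  fix t assume "t \<in> {s \<in> del_value g ` S. s < del_value g k}"
  then obtain s where "s \<in> S" "del_value g s < del_value g k" "t = del_value g s" by blast
  then show "t \<in> del_value g ` {s \<in> S. s < k}"
    using assms del_value_less_iff[of s g k] by auto
qed

lemma bij_betw_del_value:
  assumes "0 < g" "g \<le> b"
  shows "bij_betw (del_value g) {k. k \<le> b \<and> k \<noteq> g} {k. k \<le> b - 1}"
proof (rule bij_betw_imageI)
  show "inj_on (del_value g) {k. k \<le> b \<and> k \<noteq> g}"
    by (simp add: inj_on_del_value)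
  have "k \<in> del_value g ` {k. k \<le> b \<and> k \<noteq> g}" if "k \<le> b - 1" for k
  proof (cases "k < g")
    case True
    then show ?thesis using assms that by (intro image_eqI[of _ _ k]) (auto simp: del_value_def)
  next
    case False
    then show ?thesis using assms that by (intro image_eqI[of _ _ "Suc k"]) (auto simp: del_value_def)
  qed
  then show "del_value g ` {k. k \<le> b \<and> k \<noteq> g} = {k. k \<le> b - 1}"
    using assms by (auto simp: del_value_def)
qed

lemma ext_weight_delete_value:
  assumes "0 < g" "g \<le> b" "int g \<noteq> l" "g \<notin> M" "g \<in> V" "finite M"
  shows "ext_weight x u z v (\<lambda>k. k \<noteq> g) n (b, l, V, M) =
    ext_weight x u z v (\<lambda>_. True) n (b - 1, del_value_int g l, del_value g ` (V - {g}), del_value g ` M)"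
proof (rule ext_weight_bisim[where h = "\<lambda>_. del_value g"])
  let ?R = "\<lambda>\<sigma> \<tau>. \<exists>b l V M. \<sigma> = (b, l, V, M) \<and> g \<le> b \<and> int g \<noteq> l \<and> g \<notin> M \<and> g \<in> V \<and> finite M
      \<and> \<tau> = (b - 1, del_value_int g l, del_value g ` (V - {g}), del_value g ` M)"
  show "?R (b, l, V, M) (b - 1, del_value_int g l, del_value g ` (V - {g}), del_value g ` M)"
    using assms by (intro exI conjI refl) auto
  fix \<sigma> \<tau> assume "?R \<sigma> \<tau>"
  then obtain b l V M where H: "\<sigma> = (b, l, V, M)" "g \<le> b" "int g \<noteq> l" "g \<notin> M" "g \<in> V" "finite M"
      "\<tau> = (b - 1, del_value_int g l, del_value g ` (V - {g}), del_value g ` M)" by blast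
  show "card (minima \<sigma>) = card (minima \<tau>)"
    using H by (simp add: card_image inj_on_del_value)
  show "bij_betw (del_value g) (letters (\<lambda>k. k \<noteq> g) \<sigma>) (letters (\<lambda>_. True) \<tau>)"
    using H assms(1) bij_betw_del_value[of g b] by (simp add: letters_def)
  fix k assume "k \<in> letters (\<lambda>k. k \<noteq> g) \<sigma>"
  then have k: "k \<noteq> g" "k \<le> b" using H by (auto simp: letters_def)
  have ascent: "del_value_int g l < int (del_value g k) \<longleftrightarrow> l < int k"
    using H k by (auto simp: del_value_def del_value_int_def)
  have used: "del_value g k \<in> del_value g ` (V - {g}) \<longleftrightarrow> k \<in> V"
    using k del_value_inj by blast
  have zero: "del_value g k = 0 \<longleftrightarrow> k = 0"
    using assms(1) by (auto simp: del_value_def)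
  have last: "del_value_int g (int k) = int (del_value g k)"
    using k by (auto simp: del_value_def del_value_int_def)
  show "step_weight x u z \<sigma> k = step_weight x u z \<tau> (del_value g k) \<and> ?R (step \<sigma> k) (step \<tau> (del_value g k))"
  proof
    show "step_weight x u z \<sigma> k = step_weight x u z \<tau> (del_value g k)"
      using H by (simp add: ascent used zero)
    have "1 \<le> b" using H assms(1) by simp
    show "?R (step \<sigma> k) (step \<tau> (del_value g k))"
    proof (intro exI conjI)
      show "step \<sigma> k = (if int k > l then Suc b else b, int k, insert k V, insert k {m \<in> M. m < k})"
        using H by simp
      show "step \<tau> (del_value g k) = ((if int k > l then Suc b else b) - 1, del_value_int g (int k),
          del_value g ` (insert k V - {g}), del_value g ` insert k {m \<in> M. m < k})"
        using H k \<open>1 \<le> b\<close> by (auto simp: ascent last del_value_image_filter insert_Diff_if)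
    qed (use H k in auto)
  qed
qed

definition shift_down :: "nat \<Rightarrow> nat \<Rightarrow> nat" where
  "shift_down c k = k - Suc c"

lemma shift_down_less_iff: "c < a \<Longrightarrow> c < b \<Longrightarrow> shift_down c a < shift_down c b \<longleftrightarrow> a < b"
  by (auto simp: shift_down_def)

lemma shift_down_inj: "c < a \<Longrightarrow> c < b \<Longrightarrow> shift_down c a = shift_down c b \<Longrightarrow> a = b"
  by (simp add: shift_down_def)

lemma inj_on_shift_down: "\<forall>s\<in>S. c < s \<Longrightarrow> inj_on (shift_down c) S"
  using shift_down_inj by (metis inj_onI)

lemma shift_down_image_filter:
  assumes "\<forall>s\<in>S. c < s" "c < k"
  shows "shift_down c ` {s \<in> S. s < k} = {s \<in> shift_down c ` S. s < shift_down c k}"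
  using assms shift_down_less_iff[of c _ k] by auto

lemma bij_betw_shift_down:
  assumes "c < b"
  shows "bij_betw (shift_down c) {k. k \<le> b \<and> c < k} {k. k \<le> b - Suc c}"
proof (rule bij_betw_imageI)
  show "inj_on (shift_down c) {k. k \<le> b \<and> c < k}"
    by (simp add: inj_on_shift_down)
  have "k \<in> shift_down c ` {k. k \<le> b \<and> c < k}" if "k \<le> b - Suc c" for k
    using that assms by (intro image_eqI[of _ _ "k + Suc c"]) (auto simp: shift_down_def)
  then show "shift_down c ` {k. k \<le> b \<and> c < k} = {k. k \<le> b - Suc c}"
    by (auto simp: shift_down_def)
qed

lemma ext_weight_shift_down:
  assumes "c < b" "int c \<le> l" "\<forall>m\<in>M. c < m" "finite M"
  shows "ext_weight x u z v (\<lambda>k. c < k) n (b, l, V, M) =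
    ext_weight x u 1 v (\<lambda>_. True) n (b - Suc c, l - int (Suc c), shift_down c ` {k \<in> V. c < k}, shift_down c ` M)"
proof (rule ext_weight_bisim[where h = "\<lambda>_. shift_down c"])
  let ?R = "\<lambda>\<sigma> \<tau>. \<exists>b l V M. \<sigma> = (b, l, V, M) \<and> c < b \<and> int c \<le> l \<and> (\<forall>m\<in>M. c < m) \<and> finite M
      \<and> \<tau> = (b - Suc c, l - int (Suc c), shift_down c ` {k \<in> V. c < k}, shift_down c ` M)"
  show "?R (b, l, V, M) (b - Suc c, l - int (Suc c), shift_down c ` {k \<in> V. c < k}, shift_down c ` M)"
    using assms by (intro exI conjI refl) auto
  fix \<sigma> \<tau> assume "?R \<sigma> \<tau>"
  then obtain b l V M where H: "\<sigma> = (b, l, V, M)" "c < b" "int c \<le> l" "\<forall>m\<in>M. c < m" "finite M"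
      "\<tau> = (b - Suc c, l - int (Suc c), shift_down c ` {k \<in> V. c < k}, shift_down c ` M)" by blast
  show "card (minima \<sigma>) = card (minima \<tau>)"
    using H by (simp add: card_image inj_on_shift_down)
  show "bij_betw (shift_down c) (letters (\<lambda>k. c < k) \<sigma>) (letters (\<lambda>_. True) \<tau>)"
    using H bij_betw_shift_down[of c b] by (simp add: letters_def)
  fix k assume "k \<in> letters (\<lambda>k. c < k) \<sigma>"
  then have k: "c < k" "k \<le> b" using H by (auto simp: letters_def)
  have used: "shift_down c k \<in> shift_down c ` {k \<in> V. c < k} \<longleftrightarrow> k \<in> V"
    using k shift_down_inj[of c k] by blast
  have ascent: "l - int (Suc c) < int (shift_down c k) \<longleftrightarrow> l < int k"
    using k by (auto simp: shift_down_def)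
  show "step_weight x u z \<sigma> k = step_weight x u 1 \<tau> (shift_down c k) \<and> ?R (step \<sigma> k) (step \<tau> (shift_down c k))"
  proof
    show "step_weight x u z \<sigma> k = step_weight x u 1 \<tau> (shift_down c k)"
      using H k used ascent by simp
    show "?R (step \<sigma> k) (step \<tau> (shift_down c k))"
    proof (intro exI conjI)
      show "step \<sigma> k = (if int k > l then Suc b else b, int k, insert k V, insert k {m \<in> M. m < k})"
        using H by simp
      have "{k' \<in> insert k V. c < k'} = insert k {k \<in> V. c < k}" using k by auto
      then show "step \<tau> (shift_down c k) = ((if int k > l then Suc b else b) - Suc c, int k - int (Suc c),
          shift_down c ` {k' \<in> insert k V. c < k'}, shift_down c ` insert k {m \<in> M. m < k})"
        using H k ascent by (simp add: shift_down_image_filter Suc_diff_Suc) (simp add: shift_down_def)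
    qed (use H k in auto)
  qed
qed

section \<open>Saturated states and the kernel relation\<close>

definition ext_gf :: "'a::field \<Rightarrow> 'a \<Rightarrow> 'a \<Rightarrow> 'a \<Rightarrow> (nat \<Rightarrow> bool) \<Rightarrow> state \<Rightarrow> 'a fps" where
  "ext_gf x u z v P \<sigma> = Abs_fps (\<lambda>n. ext_weight x u z v P n \<sigma>)"

lemma ext_gf_unfold:
  "ext_gf x u z v P \<sigma> = fps_const (v ^ card (minima \<sigma>))
     + fps_X * (\<Sum>k\<in>letters P \<sigma>. fps_const (step_weight x u z \<sigma> k) * ext_gf x u z v P (step \<sigma> k))"
proof (rule fps_ext)
  fix n
  show "ext_gf x u z v P \<sigma> $ n = (fps_const (v ^ card (minima \<sigma>))
     + fps_X * (\<Sum>k\<in>letters P \<sigma>. fps_const (step_weight x u z \<sigma> k) * ext_gf x u z v P (step \<sigma> k))) $ n"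
    by (cases n) (simp_all add: ext_gf_def fps_X_mult_nth fps_sum_nth)
qed

text \<open>
  The state after \<open>0, 1, ..., b - 1, l\<close>. No ascent sequence reaches it for \<open>l = -1\<close>; that case
  is the boundary term of the telescoping sums below.
\<close>

definition saturated_state :: "nat \<Rightarrow> int \<Rightarrow> state" where
  "saturated_state b l = (b, l, {..<b}, {k. int k \<le> l})"

lemma saturated_state_nat: "saturated_state b (int j) = (b, int j, {..<b}, {..j})"
  by (auto simp: saturated_state_def)

lemma saturated_state_pred: "saturated_state b (int j - 1) = (b, int j - 1, {..<b}, {..<j})"
  by (auto simp: saturated_state_def)

abbreviation sat_gf :: "'a::field \<Rightarrow> 'a \<Rightarrow> 'a \<Rightarrow> 'a \<Rightarrow> nat \<Rightarrow> int \<Rightarrow> 'a fps" where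
  "sat_gf x u z v b l \<equiv> ext_gf x u z v (\<lambda>_. True) (saturated_state b l)"

lemma sat_gf_empty: "sat_gf x u z v 0 (-1) = 1 + fps_X * fps_const (u * z) * sat_gf x u z v 1 0"
proof -
  have "letters (\<lambda>_. True) (saturated_state 0 (-1)) = {0}"
    by (auto simp: letters_def saturated_state_def)
  moreover have "step (saturated_state 0 (-1)) 0 = saturated_state 1 0"
    by (auto simp: saturated_state_def)
  ultimately show ?thesis
    by (subst ext_gf_unfold) (simp add: saturated_state_def algebra_simps)
qed

lemma sat_gf_last_top:
  "sat_gf x u z v (Suc a) (int a) = fps_const (v ^ Suc a) + fps_X *
     ((\<Sum>k<Suc a. fps_const (x * (if k = 0 then z else 1)) * sat_gf x u z v (Suc a) (int k))
      + fps_const u * sat_gf x u z v (Suc (Suc a)) (int (Suc a)))"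
proof -
  let ?\<sigma> = "saturated_state (Suc a) (int a)"
  have "letters (\<lambda>_. True) ?\<sigma> = insert (Suc a) {..<Suc a}"
    by (auto simp: letters_def saturated_state_def)
  moreover have "card (minima ?\<sigma>) = Suc a"
    by (simp add: saturated_state_nat)
  moreover have "step_weight x u z ?\<sigma> (Suc a) = u"
    by (simp add: saturated_state_nat)
  moreover have "step ?\<sigma> (Suc a) = saturated_state (Suc (Suc a)) (int (Suc a))"
    by (simp only: saturated_state_nat step.simps) (auto simp: lessThan_Suc atMost_Suc)
  moreover have "(\<Sum>k<Suc a. fps_const (step_weight x u z ?\<sigma> k) * ext_gf x u z v (\<lambda>_. True) (step ?\<sigma> k)) =
      (\<Sum>k<Suc a. fps_const (x * (if k = 0 then z else 1)) * sat_gf x u z v (Suc a) (int k))"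
  proof (rule sum.cong[OF refl])
    fix k assume "k \<in> {..<Suc a}"
    then have "step_weight x u z ?\<sigma> k = x * (if k = 0 then z else 1)"
      and "step ?\<sigma> k = saturated_state (Suc a) (int k)"
      by (simp_all only: saturated_state_nat step.simps) (auto simp: insert_absorb)
    then show "fps_const (step_weight x u z ?\<sigma> k) * ext_gf x u z v (\<lambda>_. True) (step ?\<sigma> k) =
        fps_const (x * (if k = 0 then z else 1)) * sat_gf x u z v (Suc a) (int k)" by simp
  qed
  ultimately show ?thesis
    by (subst ext_gf_unfold) (simp only: sum.insert finite_lessThan lessThan_iff less_irrefl
        not_False_eq_True add.commute)
qed

lemma ext_gf_above_last:
  assumes "j < b"
  shows "ext_gf x u z v (\<lambda>k. j < k) (b, int j, {..<b}, {..<j}) = fps_const (v ^ j) * sat_gf x u 1 v (b - Suc j) (-1)"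
proof (rule fps_ext)
  fix n
  have "ext_weight x u z v (\<lambda>k. j < k) n (b, int j, {..<b}, {} \<union> {..<j}) =
      v ^ card {..<j} * ext_weight x u z v (\<lambda>k. j < k) n (b, int j, {..<b}, {})"
    by (rule ext_weight_low_minima[where c = j]) auto
  also have "ext_weight x u z v (\<lambda>k. j < k) n (b, int j, {..<b}, {}) =
      ext_weight x u 1 v (\<lambda>_. True) n (b - Suc j, int j - int (Suc j), shift_down j ` {k \<in> {..<b}. j < k}, shift_down j ` {})"
    by (rule ext_weight_shift_down) (use assms in auto)
  also have "shift_down j ` {k \<in> {..<b}. j < k} = {..<b - Suc j}"
  proof (intro equalityI subsetI)
    fix k assume "k \<in> {..<b - Suc j}"
    then show "k \<in> shift_down j ` {k \<in> {..<b}. j < k}"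
      by (intro image_eqI[of _ _ "k + Suc j"]) (auto simp: shift_down_def)
  qed (auto simp: shift_down_def)
  finally show "ext_gf x u z v (\<lambda>k. j < k) (b, int j, {..<b}, {..<j}) $ n =
      (fps_const (v ^ j) * sat_gf x u 1 v (b - Suc j) (-1)) $ n"
    by (simp add: ext_gf_def saturated_state_def)
qed

lemma sat_gf_split_last:
  "sat_gf x u z v b (int j) = ext_gf x u z v (\<lambda>_. True) (b, int j, {..<b}, {..<j})
     + fps_const (v - 1) * ext_gf x u z v (\<lambda>k. j < k) (b, int j, {..<b}, {..<j})"
proof (rule fps_ext)
  fix n
  have "insert j {..<j} = {..j}" by auto
  then show "sat_gf x u z v b (int j) $ n = (ext_gf x u z v (\<lambda>_. True) (b, int j, {..<b}, {..<j})
     + fps_const (v - 1) * ext_gf x u z v (\<lambda>k. j < k) (b, int j, {..<b}, {..<j})) $ n"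
    using ext_weight_insert_minimum[of "{..<j}" j x u z v "\<lambda>_. True" n b "int j" "{..<b}"]
    by (simp add: ext_gf_def saturated_state_nat)
qed

text \<open>
  After the last letters \<open>j\<close> and \<open>j - 1\<close> all letters behave alike except \<open>j\<close>, an ascent only
  in the second case.
\<close>

lemma ext_gf_lower_last:
  assumes "j < b"
  shows "ext_gf x u z v (\<lambda>_. True) (b, int j, {..<b}, {..<j}) = sat_gf x u z v b (int j - 1)
    + fps_X * fps_const (x * (if j = 0 then z else 1)) *
      (sat_gf x u z v b (int j) - fps_const u * ext_gf x u z v (\<lambda>_. True) (Suc b, int j, {..<b}, {..j}))"
proof -
  let ?\<sigma> = "(b, int j, {..<b}, {..<j})" and ?\<tau> = "saturated_state b (int j - 1)"
  let ?f = "\<lambda>\<rho> k. fps_const (step_weight x u z \<rho> k) * ext_gf x u z v (\<lambda>_. True) (step \<rho> k)"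
  have \<tau>: "?\<tau> = (b, int j - 1, {..<b}, {..<j})"
    by (rule saturated_state_pred)
  have letters: "letters (\<lambda>_. True) ?\<sigma> = {..b}" "letters (\<lambda>_. True) ?\<tau> = {..b}"
    by (auto simp: letters_def saturated_state_def)
  have "j \<in> {..b}" using assms by simp
  then have split: "sum (?f \<rho>) {..b} = ?f \<rho> j + sum (?f \<rho>) ({..b} - {j})" for \<rho>
    by (rule sum.remove[OF finite_atMost])
  have others: "sum (?f ?\<sigma>) ({..b} - {j}) = sum (?f ?\<tau>) ({..b} - {j})"
  proof (rule sum.cong[OF refl])
    fix k assume "k \<in> {..b} - {j}"
    then have "int j < int k \<longleftrightarrow> int j - 1 < int k" by auto
    then show "?f ?\<sigma> k = ?f ?\<tau> k" unfolding \<tau> by simp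
  qed
  have "step ?\<sigma> j = saturated_state b (int j)" "step ?\<tau> j = (Suc b, int j, {..<b}, {..j})"
    using assms unfolding \<tau> by (auto simp: saturated_state_nat)
  moreover have "step_weight x u z ?\<sigma> j = x * (if j = 0 then z else 1)"
    "step_weight x u z ?\<tau> j = u * (x * (if j = 0 then z else 1))"
    using assms unfolding \<tau> by simp_all
  moreover have "card (minima ?\<sigma>) = j" "card (minima ?\<tau>) = j"
    unfolding \<tau> by simp_all
  ultimately show ?thesis
    by (subst (1 2) ext_gf_unfold) (simp only: letters split others, simp add: algebra_simps)
qed

lemma ext_gf_unused_top:
  assumes "j < b"
  shows "fps_const x * ext_gf x u z v (\<lambda>_. True) (Suc b, int j, {..<b}, {..j}) =
    sat_gf x u z v (Suc b) (int j) - fps_const (1 - x) * sat_gf x u z v b (int j)"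
proof (rule fps_ext)
  fix n
  have "x * ext_weight x u z v (\<lambda>_. True) n (Suc b, int j, {..<b}, {..j}) =
      ext_weight x u z v (\<lambda>_. True) n (Suc b, int j, insert b {..<b}, {..j})
      - (1 - x) * ext_weight x u z v (\<lambda>k. True \<and> k \<noteq> b) n (Suc b, int j, insert b {..<b}, {..j})"
    by (rule ext_weight_mark_used) simp
  also have "insert b {..<b} = {..<Suc b}" by auto
  also have "ext_weight x u z v (\<lambda>k. True \<and> k \<noteq> b) n (Suc b, int j, {..<Suc b}, {..j}) =
      ext_weight x u z v (\<lambda>_. True) n (b, del_value_int b (int j), del_value b ` ({..<Suc b} - {b}), del_value b ` {..j})"
    using ext_weight_delete_value[of b "Suc b" "int j" "{..j}" "{..<Suc b}" x u z v n] assms by simp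
  also have "del_value_int b (int j) = int j"
    using assms by (simp add: del_value_int_def)
  also have "del_value b ` ({..<Suc b} - {b}) = {..<b}"
    by (auto simp: del_value_def image_iff)
  also have "del_value b ` {..j} = {..j}"
    using assms by (auto simp: del_value_def image_iff)
  finally show "(fps_const x * ext_gf x u z v (\<lambda>_. True) (Suc b, int j, {..<b}, {..j})) $ n =
      (sat_gf x u z v (Suc b) (int j) - fps_const (1 - x) * sat_gf x u z v b (int j)) $ n"
    by (simp add: ext_gf_def saturated_state_nat)
qed

lemma sat_gf_kernel:
  fixes x u z v :: "'a::field"
  assumes "j < b"
  defines "zj \<equiv> fps_const (if j = 0 then z else 1)"
  shows "fps_X * fps_const u * zj * sat_gf x u z v (Suc b) (int j) =
    sat_gf x u z v b (int j - 1) - sat_gf x u z v b (int j)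
    + fps_const (u + x - x * u) * fps_X * zj * sat_gf x u z v b (int j)
    + fps_const (v - 1) * fps_const (v ^ j) * sat_gf x u 1 v (b - Suc j) (-1)"
proof -
  let ?E = "ext_gf x u z v (\<lambda>_. True) (Suc b, int j, {..<b}, {..j})"
  have "fps_const (u + x - x * u) = fps_const x + fps_const u * (1 - fps_const x)"
    by (simp add: algebra_simps)
  moreover have "fps_const (x * (if j = 0 then z else 1)) = fps_const x * zj"
    by (simp add: zj_def)
  ultimately show ?thesis
    using sat_gf_split_last[of x u z v b j] ext_gf_lower_last[OF assms(1), of x u z v]
      ext_gf_unused_top[OF assms(1), of x u z v] ext_gf_above_last[OF assms(1), of x u z v]
    by (simp only: fps_const_sub fps_const_1_eq_1[symmetric]) algebra
qed

section \<open>Ascent sequences and their states\<close>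

lemma asc_take: "i \<le> length s \<Longrightarrow> asc (take i s) = card {j. Suc j < i \<and> s ! j < s ! Suc j}"
  unfolding asc_def by (rule arg_cong[where f = card]) auto

lemma asc_le_length: "asc s \<le> length s - 1"
proof -
  have "{i. Suc i < length s \<and> s ! i < s ! Suc i} \<subseteq> {..<length s - 1}" by auto
  then show ?thesis
    unfolding asc_def by (metis card_lessThan card_mono finite_lessThan)
qed

lemma asc_snoc:
  assumes "s \<noteq> []"
  shows "asc (s @ [k]) = asc s + (if last s < k then 1 else 0)"
proof -
  let ?A = "{i. Suc i < length s \<and> s ! i < s ! Suc i}"
  have "Suc i < length (s @ [k]) \<and> (s @ [k]) ! i < (s @ [k]) ! Suc i \<longleftrightarrow>
      i \<in> ?A \<or> (i = length s - 1 \<and> last s < k)" for i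
  proof (cases "Suc i < length s")
    case False
    then show ?thesis
      using assms by (cases "i = length s - 1") (auto simp: nth_append last_conv_nth)
  qed (auto simp: nth_append)
  then have "{i. Suc i < length (s @ [k]) \<and> (s @ [k]) ! i < (s @ [k]) ! Suc i} =
      ?A \<union> (if last s < k then {length s - 1} else {})"
    by auto
  moreover have "finite ?A"
    by (rule finite_subset[of _ "{..<length s}"]) auto
  moreover have "length s - 1 \<notin> ?A"
    by auto
  ultimately show ?thesis
    unfolding asc_def by simp
qed

lemma ascent_seq_snoc:
  assumes "s \<noteq> []"
  shows "ascent_seq (s @ [k]) \<longleftrightarrow> ascent_seq s \<and> k \<le> asc s + 1"
proof -
  have prefix: "(s @ [k]) ! i = s ! i \<and> take i (s @ [k]) = take i s" if "i < length s" for i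
    using that by (simp add: nth_append)
  have "(\<forall>i. 1 \<le> i \<and> i < length (s @ [k]) \<longrightarrow> (s @ [k]) ! i \<le> asc (take i (s @ [k])) + 1) \<longleftrightarrow>
      (\<forall>i. 1 \<le> i \<and> i < length s \<longrightarrow> s ! i \<le> asc (take i s) + 1) \<and> k \<le> asc s + 1"
    using assms prefix by (auto simp: less_Suc_eq Suc_le_eq)
  moreover have "(s @ [k]) ! 0 = s ! 0"
    using assms prefix[of 0] by simp
  ultimately show ?thesis
    using assms by (simp add: ascent_seq_def)
qed

lemma zero_st_snoc: "zero_st (s @ [k]) = zero_st s + (if k = 0 then 1 else 0)"
proof -
  have "{i. i < length (s @ [k]) \<and> (s @ [k]) ! i = 0} =
      {i. i < length s \<and> s ! i = 0} \<union> (if k = 0 then {length s} else {})"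
    by (auto simp: nth_append less_Suc_eq)
  then show ?thesis
    unfolding zero_st_def by simp
qed

lemma rep_snoc: "rep (s @ [k]) = rep s + (if k \<in> set s then 1 else 0)"
  using card_length[of s] by (auto simp: rep_def card_insert_if)

definition rmin_positions :: "nat list \<Rightarrow> nat set" where
  "rmin_positions s = {i. i < length s \<and> (\<forall>j. i < j \<and> j < length s \<longrightarrow> s ! i < s ! j)}"

definition rmin_values :: "nat list \<Rightarrow> nat set" where
  "rmin_values s = (\<lambda>i. s ! i) ` rmin_positions s"

lemma card_rmin_values: "card (rmin_values s) = rmin s"
proof -
  have "inj_on (\<lambda>i. s ! i) (rmin_positions s)"
  proof (rule inj_onI)
    fix i j assume "i \<in> rmin_positions s" "j \<in> rmin_positions s" "s ! i = s ! j"
    then show "i = j"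
      unfolding rmin_positions_def by (cases i j rule: linorder_cases) auto
  qed
  then show ?thesis
    by (simp add: rmin_values_def card_image rmin_def rmin_positions_def)
qed

lemma rmin_positions_snoc: "rmin_positions (s @ [k]) = insert (length s) {i \<in> rmin_positions s. s ! i < k}"
proof (intro equalityI subsetI)
  fix i assume "i \<in> rmin_positions (s @ [k])"
  then have i: "i < Suc (length s)" "\<forall>j. i < j \<and> j < Suc (length s) \<longrightarrow> (s @ [k]) ! i < (s @ [k]) ! j"
    unfolding rmin_positions_def by auto
  show "i \<in> insert (length s) {i \<in> rmin_positions s. s ! i < k}"
  proof (cases "i = length s")
    case False
    then have "i < length s" using i by simp
    moreover have "s ! i < s ! j" if "i < j" "j < length s" for j
      using i(2)[rule_format, of j] that \<open>i < length s\<close> by (simp add: nth_append)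
    moreover have "s ! i < k"
      using i(2)[rule_format, of "length s"] \<open>i < length s\<close> by (simp add: nth_append)
    ultimately show ?thesis
      unfolding rmin_positions_def by auto
  qed simp
qed (auto simp: rmin_positions_def nth_append less_Suc_eq)

lemma rmin_values_snoc: "rmin_values (s @ [k]) = insert k {a \<in> rmin_values s. a < k}"
proof -
  have "(s @ [k]) ! i = s ! i" if "i \<in> rmin_positions s" for i
    using that by (simp add: rmin_positions_def nth_append)
  then have "(\<lambda>i. (s @ [k]) ! i) ` {i \<in> rmin_positions s. s ! i < k} = (\<lambda>i. s ! i) ` {i \<in> rmin_positions s. s ! i < k}"
    by (intro image_cong) auto
  then show ?thesis
    by (auto simp: rmin_values_def rmin_positions_snoc)
qed

definition state_of :: "nat list \<Rightarrow> state" where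
  "state_of s = (Suc (asc s), int (last s), set s, rmin_values s)"

lemma state_of_snoc: "s \<noteq> [] \<Longrightarrow> state_of (s @ [k]) = step (state_of s) k"
  by (simp add: state_of_def asc_snoc rmin_values_snoc)

definition prefix_weight :: "'a::field \<Rightarrow> 'a \<Rightarrow> 'a \<Rightarrow> nat list \<Rightarrow> 'a" where
  "prefix_weight x u z s = x ^ rep s * u ^ asc s * z ^ zero_st s"

lemma prefix_weight_snoc:
  "s \<noteq> [] \<Longrightarrow> prefix_weight x u z (s @ [k]) = prefix_weight x u z s * step_weight x u z (state_of s) k"
  by (simp add: prefix_weight_def state_of_def asc_snoc rep_snoc zero_st_snoc power_add)

lemma ascent_seq_nth_le:
  assumes "ascent_seq s" "i < length s"
  shows "s ! i \<le> i"
proof (cases "i = 0")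
  case False
  then have "s ! i \<le> asc (take i s) + 1"
    using assms unfolding ascent_seq_def by auto
  moreover have "asc (take i s) \<le> i - 1"
    using asc_le_length[of "take i s"] assms by simp
  ultimately show ?thesis
    using False by simp
qed (use assms in \<open>simp add: ascent_seq_def\<close>)

lemma finite_ascent_seqs_length: "finite {s. ascent_seq s \<and> length s = n}"
proof (rule finite_subset)
  show "{s. ascent_seq s \<and> length s = n} \<subseteq> {s. set s \<subseteq> {..n} \<and> length s = n}"
    by (auto simp: in_set_conv_nth) (meson ascent_seq_nth_le less_imp_le_nat order.trans)
  show "finite {s. set s \<subseteq> {..n} \<and> length s = n}"
    by (rule finite_lists_length_eq) simp
qed

definition extensions :: "nat list \<Rightarrow> nat \<Rightarrow> nat list set" where
  "extensions p n = {s. ascent_seq s \<and> length s = length p + n \<and> take (length p) s = p}"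

lemma finite_extensions: "finite (extensions p n)"
  by (rule finite_subset[OF _ finite_ascent_seqs_length[of "length p + n"]]) (auto simp: extensions_def)

lemma extensions_Suc:
  assumes "ascent_seq p"
  shows "extensions p (Suc n) = (\<Union>k\<le>Suc (asc p). extensions (p @ [k]) n)"
proof (intro equalityI subsetI)
  fix s assume "s \<in> extensions p (Suc n)"
  then have s: "ascent_seq s" "length s = length p + Suc n" "take (length p) s = p"
    by (auto simp: extensions_def)
  have "p \<noteq> []" using assms by (simp add: ascent_seq_def)
  then have "1 \<le> length p \<and> length p < length s"
    using s(2) by (simp add: Suc_le_eq)
  then have "s ! length p \<le> asc (take (length p) s) + 1"
    using s(1) unfolding ascent_seq_def by blast
  then have "s ! length p \<le> asc p + 1"
    using s(3) by simp
  moreover have "s \<in> extensions (p @ [s ! length p]) n"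
    using s by (simp add: extensions_def take_Suc_conv_app_nth)
  ultimately show "s \<in> (\<Union>k\<le>Suc (asc p). extensions (p @ [k]) n)"
    by (intro UN_I[of "s ! length p"]) simp_all
next
  fix s assume "s \<in> (\<Union>k\<le>Suc (asc p). extensions (p @ [k]) n)"
  then obtain k where s: "ascent_seq s" "length s = Suc (length p) + n" "take (Suc (length p)) s = p @ [k]"
    by (auto simp: extensions_def)
  have "take (length p) s = take (length p) (take (Suc (length p)) s)"
    by simp
  then have "take (length p) s = p"
    using s(3) by simp
  then show "s \<in> extensions p (Suc n)"
    using s by (simp add: extensions_def)
qed

lemma sum_extensions:
  assumes "ascent_seq p"
  shows "(\<Sum>s\<in>extensions p n. x ^ rep s * u ^ asc s * z ^ zero_st s * v ^ rmin s) =
    prefix_weight x u z p * ext_weight x u z v (\<lambda>_. True) n (state_of p)"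
  using assms
proof (induction n arbitrary: p)
  case 0
  then have "extensions p 0 = {p}" by (auto simp: extensions_def)
  then show ?case by (simp add: prefix_weight_def state_of_def card_rmin_values)
next
  case (Suc n)
  let ?f = "\<lambda>s. x ^ rep s * u ^ asc s * z ^ zero_st s * v ^ rmin s"
  have "p \<noteq> []" using Suc.prems by (simp add: ascent_seq_def)
  have "extensions (p @ [i]) n \<inter> extensions (p @ [j]) n = {}" if "i \<noteq> j" for i j
    using that by (auto simp: extensions_def)
  then have "(\<Sum>s\<in>extensions p (Suc n). ?f s) = (\<Sum>k\<le>Suc (asc p). \<Sum>s\<in>extensions (p @ [k]) n. ?f s)"
    unfolding extensions_Suc[OF Suc.prems] by (intro sum.UNION_disjoint) (auto simp: finite_extensions)
  also have "\<dots> = (\<Sum>k\<le>Suc (asc p). prefix_weight x u z (p @ [k]) *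
      ext_weight x u z v (\<lambda>_. True) n (state_of (p @ [k])))"
    using Suc.prems \<open>p \<noteq> []\<close> by (intro sum.cong refl Suc.IH) (simp add: ascent_seq_snoc)
  also have "\<dots> = prefix_weight x u z p * (\<Sum>k\<le>Suc (asc p).
      step_weight x u z (state_of p) k * ext_weight x u z v (\<lambda>_. True) n (step (state_of p) k))"
    unfolding sum_distrib_left using \<open>p \<noteq> []\<close>
    by (intro sum.cong refl) (simp add: prefix_weight_snoc state_of_snoc)
  also have "{..Suc (asc p)} = letters (\<lambda>_. True) (state_of p)"
    by (auto simp: letters_def state_of_def)
  finally show ?case by simp
qed

lemma ascent_seq_fixed_point_down:
  assumes "ascent_seq s" "i < length s" "s ! i = i" "j \<le> i"
  shows "s ! j = j"
proof (cases "i = 0")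
  case False
  let ?A = "{j. Suc j < i \<and> s ! j < s ! Suc j}"
  \<comment> \<open>\<open>s ! i = i\<close> forces each of the first \<open>i - 1\<close> steps to be an ascent\<close>
  have "s ! i \<le> asc (take i s) + 1"
    using assms(1,2) False unfolding ascent_seq_def by simp
  then have "card {..<i - 1} \<le> card ?A"
    using assms(2,3) asc_take[of i s] by simp
  moreover have "?A \<subseteq> {..<i - 1}" by auto
  ultimately have "?A = {..<i - 1}"
    by (metis card_subset_eq finite_lessThan le_antisym card_mono)
  then have ascents: "s ! k < s ! Suc k" if "k < i - 1" for k
    using that by blast
  have "k \<le> s ! k" if "k \<le> i - 1" for k
    using that
  proof (induction k)
    case (Suc k)
    then show ?case using ascents[of k] by simp
  qed simp
  moreover have "s ! j \<le> j"
    using ascent_seq_nth_le[OF assms(1)] assms(2,4) by simp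
  ultimately show ?thesis
    using assms(3,4) by (cases "j = i") (simp_all add: le_antisym)
qed (use assms in \<open>simp add: ascent_seq_def\<close>)

lemma down_closed_eq_lessThan_card:
  assumes "finite F" "\<forall>i\<in>F. \<forall>j\<le>i. j \<in> F"
  shows "F = {..<card F}"
proof (cases "F = {}")
  case False
  have "Max F \<in> F"
    using Max_in[OF assms(1) False] .
  then have "F = {..Max F}"
    using assms by (auto intro: Max_ge)
  then show ?thesis
    by (metis card_atMost lessThan_Suc_atMost)
qed simp

definition fixed_points :: "nat list \<Rightarrow> nat set" where
  "fixed_points s = {i. i < length s \<and> s ! i = i}"

lemma fixed_points_eq:
  assumes "ascent_seq s"
  shows "fixed_points s = {..<max_st s}"
proof -
  have "finite (fixed_points s)"
    unfolding fixed_points_def by (rule finite_subset[of _ "{..<length s}"]) auto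
  moreover have "\<forall>i\<in>fixed_points s. \<forall>j\<le>i. j \<in> fixed_points s"
    unfolding fixed_points_def using ascent_seq_fixed_point_down[OF assms] by auto
  ultimately show ?thesis
    using down_closed_eq_lessThan_card by (simp add: fixed_points_def max_st_def)
qed

lemma take_Suc_max_st:
  assumes "ascent_seq s" "max_st s < length s"
  shows "1 \<le> max_st s" "s ! max_st s < max_st s" "take (Suc (max_st s)) s = [0..<max_st s] @ [s ! max_st s]"
proof -
  let ?m = "max_st s"
  have F: "i \<in> fixed_points s \<longleftrightarrow> i < ?m" for i
    using fixed_points_eq[OF assms(1)] by auto
  have "s \<noteq> []" "s ! 0 = 0"
    using assms(1) by (auto simp: ascent_seq_def)
  then show "1 \<le> ?m"
    using F[of 0] by (simp add: fixed_points_def)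
  show "s ! ?m < ?m"
    using F[of ?m] assms ascent_seq_nth_le[OF assms] by (simp add: fixed_points_def)
  show "take (Suc ?m) s = [0..<?m] @ [s ! ?m]"
  proof (rule nth_equalityI)
    fix i assume "i < length (take (Suc ?m) s)"
    then show "take (Suc ?m) s ! i = ([0..<?m] @ [s ! ?m]) ! i"
      using F[of i] by (cases "i < ?m") (auto simp: fixed_points_def nth_append less_Suc_eq)
  qed (use assms(2) in simp)
qed

lemma max_st_eqI:
  assumes "ascent_seq s" "m < length s" "take (Suc m) s = [0..<m] @ [e]" "e < m"
  shows "max_st s = m"
proof -
  have nth: "s ! i = ([0..<m] @ [e]) ! i" if "i < Suc m" for i
    using assms(3) that by (metis nth_take)
  have "fixed_points s = {..<m}"
  proof (intro equalityI subsetI)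
    fix i assume "i \<in> fixed_points s"
    then have "\<not> m \<le> i"
      using ascent_seq_fixed_point_down[OF assms(1), of i m] nth[of m] assms(4)
      by (auto simp: fixed_points_def nth_append)
    then show "i \<in> {..<m}" by simp
  qed (use nth assms(2) in \<open>auto simp: fixed_points_def nth_append\<close>)
  then show ?thesis
    using fixed_points_eq[OF assms(1)] by (metis card_lessThan)
qed

lemma ascent_seq_upt:
  assumes "1 \<le> m"
  shows "ascent_seq [0..<m]" "asc [0..<m] = m - 1"
proof -
  have "ascent_seq [0..<m] \<and> asc [0..<m] = m - 1"
    using assms
  proof (induction m rule: dec_induct)
    case (step m)
    then have "[0..<m] \<noteq> []" "last [0..<m] = m - 1" by (simp_all add: last_conv_nth)
    then show ?case
      using step.IH asc_snoc[of "[0..<m]" m] ascent_seq_snoc[of "[0..<m]" m] step.hyps by simp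
  qed (simp add: ascent_seq_def asc_def)
  then show "ascent_seq [0..<m]" "asc [0..<m] = m - 1" by simp_all
qed

definition stair :: "nat \<Rightarrow> nat \<Rightarrow> nat list" where
  "stair m e = [0..<m] @ [e]"

lemma length_stair [simp]: "length (stair m e) = Suc m"
  by (simp add: stair_def)

lemma stair_props:
  assumes "1 \<le> m" "e < m"
  shows "ascent_seq (stair m e)" "state_of (stair m e) = saturated_state m (int e)"
    "prefix_weight x u z (stair m e) = x * u ^ (m - 1) * z * (if e = 0 then z else 1)"
proof -
  have upt: "ascent_seq [0..<m]" "asc [0..<m] = m - 1" "[0..<m] \<noteq> []" "last [0..<m] = m - 1"
    using ascent_seq_upt[OF assms(1)] assms by (simp_all add: last_conv_nth)
  show "ascent_seq (stair m e)"
    unfolding stair_def using ascent_seq_snoc[OF upt(3)] upt assms by simp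
  have asc: "asc (stair m e) = m - 1"
    unfolding stair_def using asc_snoc[OF upt(3), of e] upt assms by simp
  have set: "set (stair m e) = {..<m}"
    using assms by (auto simp: stair_def)
  have "rmin_positions [0..<m] = {..<m}"
    by (auto simp: rmin_positions_def)
  then have upt_rmin: "rmin_values [0..<m] = {..<m}"
    unfolding rmin_values_def by auto
  have "rmin_values (stair m e) = {..e}"
    unfolding stair_def rmin_values_snoc upt_rmin using assms by auto
  then show "state_of (stair m e) = saturated_state m (int e)"
    using asc set assms by (simp add: state_of_def saturated_state_nat stair_def)
  have "zero_st [0..<m] = 1"
  proof -
    have "{i. i < length [0..<m] \<and> [0..<m] ! i = 0} = {0}"
      using assms by auto
    then show ?thesis by (simp add: zero_st_def)
  qed
  then have "zero_st (stair m e) = 1 + (if e = 0 then 1 else 0)"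
    unfolding stair_def zero_st_snoc by simp
  moreover have "rep (stair m e) = 1"
    using set by (simp add: rep_def stair_def)
  ultimately show "prefix_weight x u z (stair m e) = x * u ^ (m - 1) * z * (if e = 0 then z else 1)"
    by (simp add: prefix_weight_def asc)
qed

section \<open>Weighted sums over the length of the maximal prefix\<close>

text \<open>
  \<open>ysum y f = (\<Sum>m. y ^ m * f m)\<close>, truncated at \<open>m \<le> n\<close> in degree \<open>n\<close>; this is the actual sum
  when \<open>f\<close> is graded, i.e. \<open>f m\<close> is divisible by \<open>t ^ m\<close>.
\<close>

definition ysum :: "'a::comm_ring_1 \<Rightarrow> (nat \<Rightarrow> 'a fps) \<Rightarrow> 'a fps" where
  "ysum y f = Abs_fps (\<lambda>n. \<Sum>m\<le>n. y ^ m * (f m $ n))"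

definition graded :: "(nat \<Rightarrow> 'a::comm_ring_1 fps) \<Rightarrow> bool" where
  "graded f \<longleftrightarrow> (\<forall>m n. n < m \<longrightarrow> f m $ n = 0)"

lemma graded_mult: "graded f \<Longrightarrow> graded (\<lambda>m. g * f m)"
  by (simp add: graded_def fps_mult_nth)

lemma graded_scale: "graded f \<Longrightarrow> graded (\<lambda>m. fps_const (c m) * f m)"
  by (simp add: graded_def)

lemma graded_diff: "graded f \<Longrightarrow> graded g \<Longrightarrow> graded (\<lambda>m. f m - g m)"
  by (simp add: graded_def)

lemma ysum_add: "ysum y (\<lambda>m. f m + g m) = ysum y f + ysum y g"
  by (simp add: ysum_def fps_eq_iff sum.distrib algebra_simps)

lemma ysum_diff: "ysum y (\<lambda>m. f m - g m) = ysum y f - ysum y g"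
  by (simp add: ysum_def fps_eq_iff sum_subtractf algebra_simps)

lemma ysum_const_mult: "ysum y (\<lambda>m. fps_const c * f m) = fps_const c * ysum y f"
  by (simp add: ysum_def fps_eq_iff sum_distrib_left algebra_simps)

lemma ysum_power_mult: "ysum y (\<lambda>m. fps_const (w ^ m) * f m) = ysum (w * y) f"
  by (simp add: ysum_def fps_eq_iff power_mult_distrib algebra_simps)

lemma ysum_zero_weight: "ysum 0 f = f 0"
proof -
  have "(\<Sum>m\<le>n. 0 ^ m * g m) = g 0" for n and g :: "nat \<Rightarrow> 'a"
    by (induct n) simp_all
  then show ?thesis by (simp add: ysum_def fps_eq_iff)
qed

lemma ysum_mult:
  assumes "graded f"
  shows "ysum y (\<lambda>m. g * f m) = g * ysum y f"
proof (rule fps_ext)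
  fix n
  have "ysum y (\<lambda>m. g * f m) $ n = (\<Sum>m\<le>n. \<Sum>i\<le>n. y ^ m * (g $ i * f m $ (n - i)))"
    by (simp add: ysum_def fps_mult_nth atLeast0AtMost sum_distrib_left)
  also have "\<dots> = (\<Sum>i\<le>n. \<Sum>m\<le>n. y ^ m * (g $ i * f m $ (n - i)))"
    by (rule sum.swap)
  also have "\<dots> = (\<Sum>i\<le>n. g $ i * (\<Sum>m\<le>n - i. y ^ m * f m $ (n - i)))"
  proof (rule sum.cong[OF refl])
    fix i assume "i \<in> {..n}"
    have "(\<Sum>m\<le>n. y ^ m * (g $ i * f m $ (n - i))) = (\<Sum>m\<le>n - i. y ^ m * (g $ i * f m $ (n - i)))"
      using assms by (intro sum.mono_neutral_right) (auto simp: graded_def)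
    then show "(\<Sum>m\<le>n. y ^ m * (g $ i * f m $ (n - i))) = g $ i * (\<Sum>m\<le>n - i. y ^ m * f m $ (n - i))"
      by (simp add: sum_distrib_left algebra_simps)
  qed
  also have "\<dots> = (g * ysum y f) $ n"
    by (simp add: fps_mult_nth ysum_def atLeast0AtMost)
  finally show "ysum y (\<lambda>m. g * f m) $ n = (g * ysum y f) $ n" .
qed

lemma ysum_shift:
  assumes "graded f"
  shows "fps_const y * ysum y (\<lambda>m. f (Suc m)) = ysum y f - f 0"
proof (rule fps_ext)
  fix n
  have "(\<Sum>m\<le>Suc n. y ^ m * f m $ n) = f 0 $ n + (\<Sum>m\<le>n. y ^ Suc m * f (Suc m) $ n)"
    by (subst sum.atMost_Suc_shift) simp
  moreover have "(\<Sum>m\<le>Suc n. y ^ m * f m $ n) = (\<Sum>m\<le>n. y ^ m * f m $ n)"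
    using assms by (simp add: graded_def)
  ultimately show "(fps_const y * ysum y (\<lambda>m. f (Suc m))) $ n = (ysum y f - f 0) $ n"
    by (simp add: ysum_def sum_distrib_left algebra_simps)
qed

lemma ysum_rec:
  assumes "graded a" "a 0 = 0" "b 0 = 0" "\<And>m. 1 \<le> m \<Longrightarrow> a (Suc m) = b m"
  shows "ysum y a = fps_const y * (ysum y b + a 1)"
proof -
  have "(\<lambda>m. a (Suc m)) = (\<lambda>m. b m + (if m = 0 then a 1 else 0))"
    using assms(3,4) by (auto simp: fun_eq_iff)
  moreover have "ysum y (\<lambda>m. if m = 0 then g else 0) = g" for g :: "'a fps"
  proof -
    have "(\<Sum>m\<le>n. y ^ m * ((if m = 0 then g else 0) $ n)) = g $ n" for n
      by (subst sum.remove[of _ 0]) auto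
    then show ?thesis by (simp add: ysum_def fps_eq_iff)
  qed
  ultimately have "ysum y (\<lambda>m. a (Suc m)) = ysum y b + a 1"
    by (simp add: ysum_add)
  then show ?thesis
    using ysum_shift[OF assms(1), of y] assms(2) by simp
qed

section \<open>Decomposition by max and ealm\<close>

text \<open>
  The weight \<open>t ^ (m + 1) * x * u ^ (m - 1) * z\<close> of the prefix \<open>0, 1, ..., m - 1, e\<close>, except for
  the second factor \<open>z\<close> when \<open>e = 0\<close>.
\<close>

definition stair_mono :: "'a::field \<Rightarrow> 'a \<Rightarrow> 'a \<Rightarrow> nat \<Rightarrow> 'a fps" where
  "stair_mono x u z m = (if m = 0 then 0 else fps_const (x * u ^ (m - 1) * z) * fps_X ^ Suc m)"

lemma stair_mono_mult_nth:
  "(stair_mono x u z m * g) $ n = (if 1 \<le> m \<and> m < n then x * u ^ (m - 1) * z * g $ (n - Suc m) else 0)"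
  by (simp add: stair_mono_def mult.assoc fps_X_power_mult_nth del: power_Suc)

lemma graded_stair_mono_sum:
  "graded (\<lambda>m. \<Sum>e\<in>A m. fps_const (c m e) * (stair_mono x u z m * g m e))"
  unfolding graded_def
  by (simp add: fps_sum_nth stair_mono_mult_nth mult.left_commute[of "fps_const _"])

lemma graded_stair_mono: "graded (stair_mono x u z)"
  using stair_mono_mult_nth[of x u z _ 1] by (simp add: graded_def)

lemma stair_mono_Suc: "1 \<le> m \<Longrightarrow> stair_mono x u z (Suc m) = fps_X * fps_const u * stair_mono x u z m"
  by (cases m) (simp_all add: stair_mono_def fps_const_mult[symmetric] algebra_simps del: fps_const_mult)

lemma stair_mono_z: "stair_mono x u z m = fps_const z * stair_mono x u 1 m"
  by (simp add: stair_mono_def fps_const_mult[symmetric] algebra_simps del: fps_const_mult)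

definition stair_gf :: "'a::field \<Rightarrow> 'a \<Rightarrow> 'a \<Rightarrow> 'a \<Rightarrow> nat \<Rightarrow> int \<Rightarrow> 'a fps" where
  "stair_gf x u z v m l = stair_mono x u z m * sat_gf x u z v m l"

lemma graded_stair_gf: "graded (\<lambda>m. stair_gf x u z v m l)"
  by (simp add: graded_def stair_gf_def stair_mono_mult_nth)

text \<open>The sequences with \<open>max = m\<close>, weighted by \<open>w ^ ealm\<close>; the factor \<open>y ^ m\<close> is left out.\<close>

definition max_gf :: "'a::field \<Rightarrow> 'a \<Rightarrow> 'a \<Rightarrow> 'a \<Rightarrow> 'a \<Rightarrow> nat \<Rightarrow> 'a fps" where
  "max_gf x u z v w m = (\<Sum>e<m. fps_const (w ^ e * (if e = 0 then z else 1)) * stair_gf x u z v m (int e))"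

lemma graded_max_gf: "graded (max_gf x u z v w)"
  unfolding max_gf_def stair_gf_def by (rule graded_stair_mono_sum)

lemma max_gf_nth:
  "max_gf x u z v w m $ n = (if 1 \<le> m \<and> m < n then
     (\<Sum>e<m. w ^ e * (x * u ^ (m - 1) * z * (if e = 0 then z else 1)) *
        ext_weight x u z v (\<lambda>_. True) (n - Suc m) (saturated_state m (int e)))
   else 0)"
  by (cases m) (simp_all add: max_gf_def stair_gf_def fps_sum_nth mult.left_commute[of "fps_const _"]
      stair_mono_mult_nth ext_gf_def ac_simps)

lemma ascent_seq_max_ealm_fiber:
  assumes "1 \<le> m" "m < n" "e < m"
  shows "{s. ascent_seq s \<and> length s = n \<and> max_st s < length s \<and> (max_st s, ealm s) = (m, e)} =
    extensions (stair m e) (n - Suc m)"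
proof (intro equalityI subsetI)
  fix s assume "s \<in> {s. ascent_seq s \<and> length s = n \<and> max_st s < length s \<and> (max_st s, ealm s) = (m, e)}"
  then have s: "ascent_seq s" "length s = n" "max_st s = m" "ealm s = e" "max_st s < length s" by auto
  have "take (Suc m) s = stair m e"
    using take_Suc_max_st[OF s(1) s(5)] s(3,4) by (simp add: ealm_def stair_def)
  then show "s \<in> extensions (stair m e) (n - Suc m)"
    using s assms by (simp add: extensions_def stair_props)
next
  fix s assume "s \<in> extensions (stair m e) (n - Suc m)"
  then have s: "ascent_seq s" "length s = n" "take (Suc m) s = [0..<m] @ [e]"
    using assms by (auto simp: extensions_def stair_props stair_def)
  have "max_st s = m"
    using max_st_eqI[OF s(1) _ s(3) assms(3)] s(2) assms by simp
  moreover have "s ! m = e"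
    using s(3) by (metis lessI nth_append_length length_upt minus_nat.diff_0 nth_take)
  ultimately show "s \<in> {s. ascent_seq s \<and> length s = n \<and> max_st s < length s \<and> (max_st s, ealm s) = (m, e)}"
    using s assms by (simp add: ealm_def)
qed

lemma sum_max_ealm_fiber:
  assumes "1 \<le> m" "m < n" "e < m"
  shows "(\<Sum>s\<in>{s \<in> {s. ascent_seq s \<and> length s = n \<and> max_st s < length s}. (max_st s, ealm s) = (m, e)}.
      x ^ rep s * y ^ max_st s * w ^ ealm s * u ^ asc s * z ^ zero_st s * v ^ rmin s) =
    y ^ m * w ^ e * (x * u ^ (m - 1) * z * (if e = 0 then z else 1)) *
      ext_weight x u z v (\<lambda>_. True) (n - Suc m) (saturated_state m (int e))"
proof -
  let ?E = "extensions (stair m e) (n - Suc m)"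
  have fiber: "{s \<in> {s. ascent_seq s \<and> length s = n \<and> max_st s < length s}. (max_st s, ealm s) = (m, e)} = ?E"
    using ascent_seq_max_ealm_fiber[OF assms] by auto
  have pointwise: "x ^ rep s * y ^ max_st s * w ^ ealm s * u ^ asc s * z ^ zero_st s * v ^ rmin s =
      y ^ m * w ^ e * (x ^ rep s * u ^ asc s * z ^ zero_st s * v ^ rmin s)" if "s \<in> ?E" for s
    using that fiber by (auto simp: ac_simps)
  have "(\<Sum>s\<in>?E. x ^ rep s * y ^ max_st s * w ^ ealm s * u ^ asc s * z ^ zero_st s * v ^ rmin s) =
      y ^ m * w ^ e * (\<Sum>s\<in>?E. x ^ rep s * u ^ asc s * z ^ zero_st s * v ^ rmin s)"
    unfolding sum_distrib_left by (rule sum.cong[OF refl]) (rule pointwise)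
  also have "\<dots> = y ^ m * w ^ e * (prefix_weight x u z (stair m e) *
      ext_weight x u z v (\<lambda>_. True) (n - Suc m) (state_of (stair m e)))"
    using assms by (simp add: sum_extensions stair_props)
  finally show ?thesis
    unfolding fiber using assms by (simp add: stair_props mult.assoc)
qed

lemma Fgf_nth:
  "Fgf x y w u z v $ n = (\<Sum>(m, e)\<in>Sigma {1..<n} (\<lambda>m. {..<m}). y ^ m * w ^ e *
     (x * u ^ (m - 1) * z * (if e = 0 then z else 1)) *
     ext_weight x u z v (\<lambda>_. True) (n - Suc m) (saturated_state m (int e)))"
proof -
  let ?S = "{s. ascent_seq s \<and> length s = n \<and> max_st s < length s}"
  let ?F = "\<lambda>s. x ^ rep s * y ^ max_st s * w ^ ealm s * u ^ asc s * z ^ zero_st s * v ^ rmin s"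
  let ?key = "\<lambda>s. (max_st s, ealm s)"
  have fin: "finite ?S"
    by (rule finite_subset[OF _ finite_ascent_seqs_length[of n]]) auto
  have keys: "?key ` ?S \<subseteq> Sigma {1..<n} (\<lambda>m. {..<m})"
    using take_Suc_max_st by (force simp: ealm_def)
  have "Fgf x y w u z v $ n = (\<Sum>s\<in>?S. ?F s)"
    by (simp add: Fgf_def)
  also have "\<dots> = (\<Sum>p\<in>Sigma {1..<n} (\<lambda>m. {..<m}). \<Sum>s\<in>{s \<in> ?S. ?key s = p}. ?F s)"
    by (rule sum.group[symmetric, OF fin _ keys]) simp
  also have "\<dots> = (\<Sum>(m, e)\<in>Sigma {1..<n} (\<lambda>m. {..<m}). y ^ m * w ^ e *
     (x * u ^ (m - 1) * z * (if e = 0 then z else 1)) *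
     ext_weight x u z v (\<lambda>_. True) (n - Suc m) (saturated_state m (int e)))"
  proof (rule sum.cong[OF refl])
    fix p assume "p \<in> Sigma {1..<n} (\<lambda>m. {..<m})"
    then obtain m e where p: "p = (m, e)" and me: "1 \<le> m" "m < n" "e < m" by auto
    show "(\<Sum>s\<in>{s \<in> ?S. ?key s = p}. ?F s) = (\<lambda>(m, e). y ^ m * w ^ e *
        (x * u ^ (m - 1) * z * (if e = 0 then z else 1)) *
        ext_weight x u z v (\<lambda>_. True) (n - Suc m) (saturated_state m (int e))) p"
      using me unfolding p prod.case by (rule sum_max_ealm_fiber)
  qed
  finally show ?thesis .
qed

theorem Fgf_eq_ysum_max_gf: "Fgf x y w u z v = ysum y (max_gf x u z v w)"
proof (rule fps_ext)
  fix n
  have "ysum y (max_gf x u z v w) $ n = (\<Sum>m\<in>{1..<n}. y ^ m * (max_gf x u z v w m $ n))"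
    by (simp add: ysum_def max_gf_nth) (intro sum.mono_neutral_cong_right; auto)
  also have "\<dots> = Fgf x y w u z v $ n"
    by (simp add: Fgf_nth max_gf_nth sum.Sigma[symmetric] sum_distrib_left ac_simps)
  finally show "Fgf x y w u z v $ n = ysum y (max_gf x u z v w) $ n" ..
qed

definition max_gf_unmarked :: "'a::field \<Rightarrow> 'a \<Rightarrow> 'a \<Rightarrow> 'a \<Rightarrow> 'a \<Rightarrow> nat \<Rightarrow> 'a fps" where
  "max_gf_unmarked x u z v w m = (\<Sum>e<m. fps_const (w ^ e) * stair_gf x u z v m (int e))"

lemma max_gf_unmarked_eq: "max_gf_unmarked x u z v w m = max_gf x u z v w m - (fps_const z - 1) * stair_gf x u z v m 0"
proof (cases m)
  case 0
  then show ?thesis by (simp add: max_gf_unmarked_def max_gf_def stair_gf_def stair_mono_def)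
next
  case (Suc m')
  then show ?thesis
    unfolding Suc max_gf_unmarked_def max_gf_def
    by (subst (1 2) sum.lessThan_Suc_shift) (simp add: algebra_simps)
qed

text \<open>
  The continuations whose letters all exceed the last letter \<open>j\<close> of the prefix, see
  \<open>ext_gf_above_last\<close>.
\<close>

definition rmin_tail_gf :: "'a::field \<Rightarrow> 'a \<Rightarrow> 'a \<Rightarrow> 'a \<Rightarrow> nat \<Rightarrow> 'a fps" where
  "rmin_tail_gf x u v w m =
     (\<Sum>j<m. fps_const ((w * v) ^ j) * (stair_mono x u 1 m * sat_gf x u 1 v (m - Suc j) (-1)))"

lemma graded_rmin_tail_gf: "graded (rmin_tail_gf x u v w)"
  unfolding rmin_tail_gf_def by (rule graded_stair_mono_sum)

lemma stair_gf_kernel: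
  fixes x u z v :: "'a::field"
  assumes "1 \<le> m" "j < m"
  defines "zj \<equiv> fps_const (if j = 0 then z else 1)"
  shows "zj * stair_gf x u z v (Suc m) (int j) =
    stair_gf x u z v m (int j - 1) - stair_gf x u z v m (int j)
    + fps_const (u + x - x * u) * fps_X * (zj * stair_gf x u z v m (int j))
    + (fps_const v - 1) * fps_const z * (fps_const (v ^ j) * (stair_mono x u 1 m * sat_gf x u 1 v (m - Suc j) (-1)))"
proof -
  have "stair_mono x u z m * (fps_X * fps_const u * zj * sat_gf x u z v (Suc m) (int j)) =
      stair_mono x u z m * (sat_gf x u z v m (int j - 1) - sat_gf x u z v m (int j)
      + fps_const (u + x - x * u) * fps_X * zj * sat_gf x u z v m (int j)
      + fps_const (v - 1) * fps_const (v ^ j) * sat_gf x u 1 v (m - Suc j) (-1))"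
    unfolding zj_def using sat_gf_kernel[OF assms(2), of u z x v] by simp
  then show ?thesis
    unfolding stair_gf_def stair_mono_Suc[OF assms(1)] stair_mono_z[of x u z m]
    by (simp add: algebra_simps)
qed

lemma max_gf_Suc_lower:
  assumes "1 \<le> m"
  shows "(\<Sum>j<m. fps_const (w ^ j * (if j = 0 then z else 1)) * stair_gf x u z v (Suc m) (int j)) =
    stair_gf x u z v m (-1) - (1 - fps_const w) * max_gf_unmarked x u z v w m
    - fps_const (w ^ m) * stair_gf x u z v m (int (m - 1))
    + fps_const (u + x - x * u) * fps_X * max_gf x u z v w m
    + (fps_const v - 1) * fps_const z * rmin_tail_gf x u v w m"
proof -
  obtain m' where m: "m = Suc m'" using assms by (cases m) auto
  let ?G = "stair_gf x u z v m" and ?r = "fps_const (u + x - x * u) * fps_X"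
  let ?T = "\<lambda>j. stair_mono x u 1 m * sat_gf x u 1 v (m - Suc j) (-1)"
  have "(\<Sum>j<m. fps_const (w ^ j * (if j = 0 then z else 1)) * stair_gf x u z v (Suc m) (int j)) =
      (\<Sum>j<m. fps_const (w ^ j) * ?G (int j - 1) - fps_const (w ^ j) * ?G (int j)
        + ?r * (fps_const (w ^ j * (if j = 0 then z else 1)) * ?G (int j))
        + (fps_const v - 1) * fps_const z * (fps_const ((w * v) ^ j) * ?T j))"
  proof (rule sum.cong[OF refl])
    fix j assume "j \<in> {..<m}"
    then have "j < m" by simp
    then show "fps_const (w ^ j * (if j = 0 then z else 1)) * stair_gf x u z v (Suc m) (int j) =
        fps_const (w ^ j) * ?G (int j - 1) - fps_const (w ^ j) * ?G (int j)
        + ?r * (fps_const (w ^ j * (if j = 0 then z else 1)) * ?G (int j))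
        + (fps_const v - 1) * fps_const z * (fps_const ((w * v) ^ j) * ?T j)"
      using stair_gf_kernel[OF assms \<open>j < m\<close>, of z x u v]
      by (simp only: power_mult_distrib fps_const_mult[symmetric]) algebra
  qed
  also have "\<dots> = (\<Sum>j<m. fps_const (w ^ j) * ?G (int j - 1)) - max_gf_unmarked x u z v w m
      + ?r * max_gf x u z v w m + (fps_const v - 1) * fps_const z * rmin_tail_gf x u v w m"
    by (simp add: sum.distrib sum_subtractf sum_distrib_left max_gf_unmarked_def max_gf_def rmin_tail_gf_def)
  also have "(\<Sum>j<m. fps_const (w ^ j) * ?G (int j - 1)) =
      ?G (-1) + fps_const w * (max_gf_unmarked x u z v w m - fps_const (w ^ m') * ?G (int m'))"
    unfolding m max_gf_unmarked_def
    by (subst sum.lessThan_Suc_shift)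
      (simp add: sum_distrib_left mult.assoc fps_const_mult[symmetric] del: fps_const_mult)
  finally show ?thesis
    by (simp only: m diff_Suc_1 power_Suc fps_const_mult[symmetric]) (simp add: algebra_simps)
qed

lemma stair_gf_top:
  assumes "1 \<le> m"
  shows "stair_gf x u z v m (int (m - 1)) = fps_const (v ^ m) * stair_mono x u z m
    + fps_X * fps_const x * max_gf x u z v 1 m + stair_gf x u z v (Suc m) (int m)"
proof -
  obtain m' where m: "m = Suc m'" using assms by (cases m) auto
  have "stair_mono x u z m * (\<Sum>k<m. fps_const (x * (if k = 0 then z else 1)) * sat_gf x u z v m (int k)) =
      fps_const x * max_gf x u z v 1 m"
    by (simp add: max_gf_def stair_gf_def sum_distrib_left algebra_simps fps_const_mult[symmetric]
        del: fps_const_mult)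
  then show ?thesis
    using sat_gf_last_top[of x u z v m'] stair_mono_Suc[OF assms, of x u z]
    unfolding stair_gf_def m diff_Suc_1 by algebra
qed

lemma max_gf_Suc:
  assumes "1 \<le> m"
  shows "max_gf x u z v w (Suc m) =
    stair_gf x u z v m (-1) - (1 - fps_const w) * max_gf_unmarked x u z v w m
    + fps_const (u + x - x * u) * fps_X * max_gf x u z v w m
    - fps_const ((w * v) ^ m) * stair_mono x u z m - fps_X * fps_const x * fps_const (w ^ m) * max_gf x u z v 1 m
    + (fps_const v - 1) * fps_const z * rmin_tail_gf x u v w m"
proof -
  have "max_gf x u z v w (Suc m) =
      (\<Sum>j<m. fps_const (w ^ j * (if j = 0 then z else 1)) * stair_gf x u z v (Suc m) (int j))
      + fps_const (w ^ m) * stair_gf x u z v (Suc m) (int m)"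
    using assms by (simp add: max_gf_def)
  then show ?thesis
    unfolding max_gf_Suc_lower[OF assms] stair_gf_top[OF assms]
    by (simp add: power_mult_distrib fps_const_mult[symmetric] algebra_simps del: fps_const_mult)
qed

lemma rmin_tail_gf_Suc:
  assumes "1 \<le> m"
  shows "rmin_tail_gf x u v w (Suc m) =
    fps_X * fps_const u * stair_gf x u 1 v m (-1) + fps_X * fps_const (u * v * w) * rmin_tail_gf x u v w m"
  unfolding rmin_tail_gf_def stair_gf_def
  by (subst sum.lessThan_Suc_shift)
    (simp add: stair_mono_Suc[OF assms] sum_distrib_left algebra_simps power_mult_distrib
      fps_const_mult[symmetric] del: fps_const_mult)

section \<open>Functional equations\<close>

lemma Fgf_functional_eq:
  "Fgf x y w u z v = fps_const y * (ysum y (\<lambda>m. stair_gf x u z v m (-1))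
     - (1 - fps_const w) * (Fgf x y w u z v - (fps_const z - 1) * ysum y (\<lambda>m. stair_gf x u z v m 0))
     + fps_const (u + x - x * u) * fps_X * Fgf x y w u z v
     - fps_const z * ysum (w * v * y) (stair_mono x u 1)
     - fps_X * fps_const x * Fgf x (w * y) 1 u z v
     + (fps_const v - 1) * fps_const z * ysum y (rmin_tail_gf x u v w)
     + fps_const z * stair_gf x u z v 1 0)"
proof -
  let ?b = "\<lambda>m. stair_gf x u z v m (-1) - (1 - fps_const w) * max_gf_unmarked x u z v w m
    + fps_const (u + x - x * u) * fps_X * max_gf x u z v w m - fps_const ((w * v) ^ m) * stair_mono x u z m
    - fps_X * fps_const x * (fps_const (w ^ m) * max_gf x u z v 1 m)
    + (fps_const v - 1) * fps_const z * rmin_tail_gf x u v w m"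
  have "?b 0 = 0"
    by (simp add: max_gf_def max_gf_unmarked_def rmin_tail_gf_def stair_gf_def stair_mono_def)
  then have "ysum y (max_gf x u z v w) = fps_const y * (ysum y ?b + max_gf x u z v w 1)"
    by (rule ysum_rec[OF graded_max_gf, rotated]) (simp add: max_gf_Suc mult.assoc, simp add: max_gf_def)
  moreover have "ysum y ?b = ysum y (\<lambda>m. stair_gf x u z v m (-1))
      - (1 - fps_const w) * (ysum y (max_gf x u z v w) - (fps_const z - 1) * ysum y (\<lambda>m. stair_gf x u z v m 0))
      + fps_const (u + x - x * u) * fps_X * ysum y (max_gf x u z v w)
      - fps_const z * ysum (w * v * y) (stair_mono x u 1)
      - fps_X * fps_const x * ysum (w * y) (max_gf x u z v 1)
      + (fps_const v - 1) * fps_const z * ysum y (rmin_tail_gf x u v w)"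
    by (simp only: ysum_add ysum_diff max_gf_unmarked_eq ysum_mult graded_max_gf graded_stair_gf
        graded_rmin_tail_gf graded_mult graded_scale graded_diff ysum_power_mult stair_mono_z[of x u z]
        mult.left_commute[of _ "fps_const z"] ysum_const_mult mult.assoc)
  moreover have "max_gf x u z v w 1 = fps_const z * stair_gf x u z v 1 0"
    by (simp add: max_gf_def)
  ultimately show ?thesis
    by (simp only: Fgf_eq_ysum_max_gf)
qed

lemma ysum_stair_mono:
  "ysum q (stair_mono x u 1) = fps_const q * (fps_X * fps_const u * ysum q (stair_mono x u 1) + fps_const x * fps_X ^ 2)"
proof -
  have "ysum q (stair_mono x u 1) = fps_const q * (ysum q (\<lambda>m. fps_X * fps_const u * stair_mono x u 1 m) + stair_mono x u 1 1)"
    by (rule ysum_rec[OF graded_stair_mono]) (simp add: stair_mono_def, simp add: stair_mono_def, simp add: stair_mono_Suc)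
  moreover have "stair_mono x u 1 1 = fps_const x * fps_X ^ 2"
    by (simp add: stair_mono_def power2_eq_square)
  ultimately show ?thesis
    by (simp only: ysum_mult[OF graded_stair_mono])
qed

lemma ysum_rmin_tail_gf:
  "ysum y (rmin_tail_gf x u v w) = fps_const y * (fps_X * fps_const u * ysum y (\<lambda>m. stair_gf x u 1 v m (-1))
     + fps_X * fps_const (u * v * w) * ysum y (rmin_tail_gf x u v w) + fps_const x * fps_X ^ 2 * sat_gf x u 1 v 0 (-1))"
proof -
  have rec: "ysum y (rmin_tail_gf x u v w) = fps_const y * (ysum y (\<lambda>m. fps_X * fps_const u * stair_gf x u 1 v m (-1)
      + fps_X * fps_const (u * v * w) * rmin_tail_gf x u v w m) + rmin_tail_gf x u v w 1)"
    by (rule ysum_rec[OF graded_rmin_tail_gf])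
      (simp add: rmin_tail_gf_def, simp add: stair_gf_def stair_mono_def rmin_tail_gf_def, simp add: rmin_tail_gf_Suc)
  have split: "ysum y (\<lambda>m. fps_X * fps_const u * stair_gf x u 1 v m (-1)
      + fps_X * fps_const (u * v * w) * rmin_tail_gf x u v w m) =
      fps_X * fps_const u * ysum y (\<lambda>m. stair_gf x u 1 v m (-1))
      + fps_X * fps_const (u * v * w) * ysum y (rmin_tail_gf x u v w)"
    by (simp only: ysum_add ysum_mult graded_stair_gf graded_rmin_tail_gf)
  have first: "rmin_tail_gf x u v w 1 = fps_const x * fps_X ^ 2 * sat_gf x u 1 v 0 (-1)"
    by (simp add: rmin_tail_gf_def stair_mono_def power2_eq_square)
  show ?thesis
    using rec unfolding split first .
qed

lemma Fgf_w_zero: "Fgf x y 0 u z v = fps_const z * ysum y (\<lambda>m. stair_gf x u z v m 0)"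
proof -
  have "max_gf x u z v 0 m = fps_const z * stair_gf x u z v m 0" for m
    by (cases m) (simp_all add: max_gf_def stair_gf_def stair_mono_def sum.lessThan_Suc_shift del: sum.lessThan_Suc)
  then have "max_gf x u z v 0 = (\<lambda>m. fps_const z * stair_gf x u z v m 0)" ..
  then show ?thesis
    by (simp only: Fgf_eq_ysum_max_gf ysum_const_mult)
qed

lemma Fgf_y_zero: "Fgf x 0 w u z v = 0"
  by (simp add: Fgf_eq_ysum_max_gf ysum_zero_weight max_gf_def)

section \<open>Elimination\<close>

lemma cleared_identity_reduced:
  fixes X Y cx cu cz cv cw r Fw f0 F1 Fwy F1p Kw K1 K0 Cw C1 :: "'b::idom"
  defines "P1 \<equiv> 1 - Y * cu * X" and "P2 \<equiv> 1 - Y * cu * cv * cw * X" and "P3 \<equiv> 1 - Y * cu * cv * X"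
    and "D \<equiv> Y - Y * cz * r + cz" and "B \<equiv> 1 - Y * X * cu + Y * X * cu * cx"
    and "K \<equiv> 1 + (1 - cw) * Y - r * Y"
    and "M \<equiv> Y ^ 2 * cu * cw * cv * (1 - cz) * X + cz * (Y - Y * r + 1)"
  assumes K1_eq: "K1 * P1 = X * cu * F1p * B + Y * X * cu * C1 + Y * cx * X ^ 2"
    and f0_eq: "D * f0 = B * F1 + Y * cz * C1 + Y * (cv - 1) * cz * (K0 - K1)"
    and Fw_eq: "K * Fw = B * F1 + (1 - cw) * Y * (cz - 1) * f0 - Y * cz * (Cw - C1) - Y * X * cx * Fwy
      + Y * (cv - 1) * cz * (Kw - K1)"
    and Kw_eq: "Kw * P2 = K1 * P3" and K0_eq: "K0 = K1 * P3"
    and Cw_eq: "Cw * P2 = Y * cw * cv * cx * X ^ 2" and C1_eq: "C1 * P3 = Y * cv * cx * X ^ 2"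
  shows "K * Fw * P1 * P2 * D =
    cx * Y * cz * cv * X ^ 2 * M * Y * (1 - cw) - X * cx * Fwy * Y * P1 * P2 * D
    + B * (cw * Y * (1 - cz) + cz * (Y - Y * r + 1)) * F1 * P1 * P2
    + Y ^ 2 * cu ^ 2 * cv * cz * (1 - cv) * X ^ 2 * B * M * F1p * (1 - cw)"
proof -
  have "K * Fw * P1 * P2 * D = B * F1 * P1 * P2 * D + (1 - cw) * Y * (cz - 1) * P1 * P2 * (D * f0)
      - Y * cz * (Cw * P2) * P1 * D + Y * cz * C1 * P1 * P2 * D - Y * X * cx * Fwy * P1 * P2 * D
      + Y * (cv - 1) * cz * ((Kw * P2) * P1 * D - K1 * P1 * P2 * D)"
    using Fw_eq by algebra
  also have "\<dots> = B * F1 * P1 * P2 * D + (1 - cw) * Y * (cz - 1) * P1 * P2 * (B * F1 + Y * cz * C1)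
      - Y * cz * (Y * cw * cv * cx * X ^ 2) * P1 * D + Y * cz * C1 * P1 * P2 * D - Y * X * cx * Fwy * P1 * P2 * D
      + Y * (cv - 1) * cz * (K1 * P1) * ((1 - cw) * Y * (cz - 1) * P2 * (P3 - 1) + D * (P3 - P2))"
    unfolding f0_eq Kw_eq Cw_eq K0_eq by algebra
  also have "\<dots> = cx * Y * cz * cv * X ^ 2 * M * Y * (1 - cw) - X * cx * Fwy * Y * P1 * P2 * D
      + B * (cw * Y * (1 - cz) + cz * (Y - Y * r + 1)) * F1 * P1 * P2
      + Y ^ 2 * cu ^ 2 * cv * cz * (1 - cv) * X ^ 2 * B * M * F1p * (1 - cw)"
    unfolding K1_eq using C1_eq unfolding P1_def P2_def P3_def D_def B_def M_def by algebra
  finally show ?thesis .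
qed

lemma cleared_identity:
  fixes X Y cx cu cz cv cw r Fw f0 F1 Fwy F1p H H1 Kw K1 K0 Cw C1 g10 h q110 :: "'b::idom"
  assumes r: "r = (cu + cx - cx * cu) * X"
    and Fw_eq: "Fw = Y * (H - (1 - cw) * (Fw - (cz - 1) * f0) + r * Fw - cz * Cw - X * cx * Fwy
      + (cv - 1) * cz * Kw + cz * g10)"
    and f0_eq: "cz * f0 = Y * (H - (cz * f0 - (cz - 1) * f0) + r * (cz * f0) + (cv - 1) * cz * K0 + cz * g10)"
    and F1_eq: "F1 = Y * (H + r * F1 - cz * C1 - X * cx * F1 + (cv - 1) * cz * K1 + cz * g10)"
    and F1p_eq: "F1p = Y * (H1 + r * F1p - C1 - X * cx * F1p + (cv - 1) * K1 + cx * X ^ 2 * q110)"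
    and Kw_eq: "Kw = Y * (X * cu * H1 + X * (cu * cv * cw) * Kw + cx * X ^ 2 * h)"
    and K1_eq: "K1 = Y * (X * cu * H1 + X * (cu * cv) * K1 + cx * X ^ 2 * h)"
    and K0_eq: "K0 = Y * (X * cu * H1 + cx * X ^ 2 * h)"
    and h_eq: "h = 1 + X * cu * q110"
    and Cw_eq: "Cw = cw * cv * Y * (X * cu * Cw + cx * X ^ 2)"
    and C1_eq: "C1 = cv * Y * (X * cu * C1 + cx * X ^ 2)"
  shows "(1 + (1 - cw) * Y - r * Y) * Fw * (1 - Y * cu * X) * (1 - Y * cu * cv * cw * X) * (Y - Y * cz * r + cz) =
    cx * Y * cz * cv * X ^ 2 * (Y ^ 2 * cu * cw * cv * (1 - cz) * X + cz * (Y - Y * r + 1)) * Y * (1 - cw)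
    - X * cx * Fwy * Y * (1 - Y * cu * X) * (1 - Y * cu * cv * cw * X) * (Y - Y * cz * r + cz)
    + (1 - Y * X * cu + Y * X * cu * cx) * (cw * Y * (1 - cz) + cz * (Y - Y * r + 1)) * F1
      * (1 - Y * cu * X) * (1 - Y * cu * cv * cw * X)
    + Y ^ 2 * cu ^ 2 * cv * cz * (1 - cv) * X ^ 2 * (1 - Y * X * cu + Y * X * cu * cx)
      * (Y ^ 2 * cu * cw * cv * (1 - cz) * X + cz * (Y - Y * r + 1)) * F1p * (1 - cw)"
proof (rule cleared_identity_reduced)
  show "K1 * (1 - Y * cu * X) = X * cu * F1p * (1 - Y * X * cu + Y * X * cu * cx) + Y * X * cu * C1 + Y * cx * X ^ 2"
    using r F1p_eq K1_eq h_eq by algebra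
  show "(Y - Y * cz * r + cz) * f0 = (1 - Y * X * cu + Y * X * cu * cx) * F1 + Y * cz * C1 + Y * (cv - 1) * cz * (K0 - K1)"
    using r f0_eq F1_eq by algebra
  show "(1 + (1 - cw) * Y - r * Y) * Fw = (1 - Y * X * cu + Y * X * cu * cx) * F1 + (1 - cw) * Y * (cz - 1) * f0
      - Y * cz * (Cw - C1) - Y * X * cx * Fwy + Y * (cv - 1) * cz * (Kw - K1)"
    using r Fw_eq F1_eq by algebra
  show "Kw * (1 - Y * cu * cv * cw * X) = K1 * (1 - Y * cu * cv * X)"
    using Kw_eq K1_eq by algebra
  show "K0 = K1 * (1 - Y * cu * cv * X)"
    using K0_eq K1_eq by algebra
  show "Cw * (1 - Y * cu * cv * cw * X) = Y * cw * cv * cx * X ^ 2"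
    using Cw_eq by algebra
  show "C1 * (1 - Y * cu * cv * X) = Y * cv * cx * X ^ 2"
    using C1_eq by algebra
qed

lemma cleared_identity_quotient:
  fixes X Y cx cu cz cv cw r Fw F1 Fwy F1p iP1 iP2 iD iy iw :: "'b::idom"
  defines "P1 \<equiv> 1 - Y * cu * X" and "P2 \<equiv> 1 - Y * cu * cv * cw * X"
    and "D \<equiv> Y - Y * cz * r + cz" and "B \<equiv> 1 - Y * X * cu + Y * X * cu * cx"
    and "M \<equiv> Y ^ 2 * cu * cw * cv * (1 - cz) * X + cz * (Y - Y * r + 1)"
  assumes cleared: "(1 + (1 - cw) * Y - r * Y) * Fw * P1 * P2 * D =
      cx * Y * cz * cv * X ^ 2 * M * Y * (1 - cw) - X * cx * Fwy * Y * P1 * P2 * D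
      + B * (cw * Y * (1 - cz) + cz * (Y - Y * r + 1)) * F1 * P1 * P2
      + Y ^ 2 * cu ^ 2 * cv * cz * (1 - cv) * X ^ 2 * B * M * F1p * (1 - cw)"
    and "P1 * iP1 = 1" "P2 * iP2 = 1" "D * iD = 1" "Y * iy = 1" "(1 - cw) * iw = 1"
  shows "(1 - (r * Y - 1) * (iy * iw)) * Fw = cx * Y * cz * cv * X ^ 2 * M * (iP1 * iP2 * iD) - X * cx * iw * Fwy
    + (cu * cx * X + iy - cu * X) * (cw * Y * (1 - cz) + cz * (Y - Y * r + 1)) * (iw * iD) * F1
    + Y ^ 2 * cu ^ 2 * cv * cz * (1 - cv) * X ^ 2 * (cu * cx * X + iy - cu * X) * iP1 * M * (iP2 * iD) * F1p"
proof -
  have "(1 - (r * Y - 1) * (iy * iw)) * Fw = iy * iw * iP1 * iP2 * iD * ((1 + (1 - cw) * Y - r * Y) * Fw * P1 * P2 * D)"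
    using assms(7-11) by algebra
  also have "\<dots> = iy * iw * iP1 * iP2 * iD * (cx * Y * cz * cv * X ^ 2 * M * Y * (1 - cw)
      - X * cx * Fwy * Y * P1 * P2 * D + B * (cw * Y * (1 - cz) + cz * (Y - Y * r + 1)) * F1 * P1 * P2
      + Y ^ 2 * cu ^ 2 * cv * cz * (1 - cv) * X ^ 2 * B * M * F1p * (1 - cw))"
    unfolding cleared ..
  also have "\<dots> = cx * Y * cz * cv * X ^ 2 * M * (iP1 * iP2 * iD) - X * cx * iw * Fwy
    + (cu * cx * X + iy - cu * X) * (cw * Y * (1 - cz) + cz * (Y - Y * r + 1)) * (iw * iD) * F1
    + Y ^ 2 * cu ^ 2 * cv * cz * (1 - cv) * X ^ 2 * (cu * cx * X + iy - cu * X) * iP1 * M * (iP2 * iD) * F1p"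
    using assms(7-11) unfolding B_def by algebra
  finally show ?thesis .
qed

lemma Fgf_cleared_identity:
  fixes x y w u z v :: "'a::field"
  defines "X \<equiv> fps_X :: 'a fps" and "Y \<equiv> fps_const y" and "cx \<equiv> fps_const x" and "cu \<equiv> fps_const u"
    and "cz \<equiv> fps_const z" and "cv \<equiv> fps_const v" and "cw \<equiv> fps_const w"
    and "r \<equiv> fps_const (u + x - x * u) * fps_X"
  shows "(1 + (1 - cw) * Y - r * Y) * Fgf x y w u z v * (1 - Y * cu * X) * (1 - Y * cu * cv * cw * X)
      * (Y - Y * cz * r + cz) =
    cx * Y * cz * cv * X ^ 2 * (Y ^ 2 * cu * cw * cv * (1 - cz) * X + cz * (Y - Y * r + 1)) * Y * (1 - cw)
    - X * cx * Fgf x (w * y) 1 u z v * Y * (1 - Y * cu * X) * (1 - Y * cu * cv * cw * X) * (Y - Y * cz * r + cz)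
    + (1 - Y * X * cu + Y * X * cu * cx) * (cw * Y * (1 - cz) + cz * (Y - Y * r + 1)) * Fgf x y 1 u z v
      * (1 - Y * cu * X) * (1 - Y * cu * cv * cw * X)
    + Y ^ 2 * cu ^ 2 * cv * cz * (1 - cv) * X ^ 2 * (1 - Y * X * cu + Y * X * cu * cx)
      * (Y ^ 2 * cu * cw * cv * (1 - cz) * X + cz * (Y - Y * r + 1)) * Fgf x y 1 u 1 v * (1 - cw)"
proof -
  let ?H = "\<lambda>z. ysum y (\<lambda>m. stair_gf x u z v m (-1))" and ?f0 = "ysum y (\<lambda>m. stair_gf x u z v m 0)"
  let ?K = "\<lambda>w. ysum y (rmin_tail_gf x u v w)" and ?C = "\<lambda>w. ysum (w * v * y) (stair_mono x u 1)"
  have F_eq: "Fgf x y w u z v = Y * (?H z - (1 - cw) * (Fgf x y w u z v - (cz - 1) * ?f0) + r * Fgf x y w u z v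
      - cz * ?C w - X * cx * Fgf x (w * y) 1 u z v + (cv - 1) * cz * ?K w + cz * stair_gf x u z v 1 0)"
    unfolding assms by (rule Fgf_functional_eq)
  have F_w0_eq: "cz * ?f0 = Y * (?H z - (cz * ?f0 - (cz - 1) * ?f0) + r * (cz * ?f0) + (cv - 1) * cz * ?K 0
      + cz * stair_gf x u z v 1 0)"
    using Fgf_functional_eq[of x y 0 u z v] unfolding assms
    by (simp add: Fgf_w_zero Fgf_y_zero ysum_zero_weight stair_mono_def)
  have F_w1_eq: "Fgf x y 1 u z v = Y * (?H z + r * Fgf x y 1 u z v - cz * ?C 1 - X * cx * Fgf x y 1 u z v
      + (cv - 1) * cz * ?K 1 + cz * stair_gf x u z v 1 0)"
    using Fgf_functional_eq[of x y 1 u z v] unfolding assms by simp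
  have F_w1_z1_eq: "Fgf x y 1 u 1 v = Y * (?H 1 + r * Fgf x y 1 u 1 v - ?C 1 - X * cx * Fgf x y 1 u 1 v
      + (cv - 1) * ?K 1 + cx * X ^ 2 * sat_gf x u 1 v 1 0)"
    using Fgf_functional_eq[of x y 1 u 1 v] unfolding assms
    by (simp add: stair_gf_def stair_mono_def power2_eq_square mult.assoc)
  have K_eq: "?K w' = Y * (X * cu * ?H 1 + X * (cu * cv * fps_const w') * ?K w' + cx * X ^ 2 * sat_gf x u 1 v 0 (-1))"
    for w'
    using ysum_rmin_tail_gf[of y x u v w'] unfolding assms by (simp add: mult.assoc)
  have sat_empty_eq: "sat_gf x u 1 v 0 (-1) = 1 + X * cu * sat_gf x u 1 v 1 0"
    using sat_gf_empty[of x u 1 v] unfolding assms by simp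
  have C_eq: "?C w' = fps_const w' * cv * Y * (X * cu * ?C w' + cx * X ^ 2)" for w'
    using ysum_stair_mono[of "w' * v * y" x u] unfolding assms by (simp add: mult.assoc)
  have K1_eq: "?K 1 = Y * (X * cu * ?H 1 + X * (cu * cv) * ?K 1 + cx * X ^ 2 * sat_gf x u 1 v 0 (-1))"
    using K_eq[of 1] by simp
  have K0_eq: "?K 0 = Y * (X * cu * ?H 1 + cx * X ^ 2 * sat_gf x u 1 v 0 (-1))"
    using K_eq[of 0] by simp
  have C1_eq: "?C 1 = cv * Y * (X * cu * ?C 1 + cx * X ^ 2)"
    using C_eq[of 1] by simp
  have "r = (cu + cx - cx * cu) * X"
    unfolding assms by (simp add: algebra_simps)
  from cleared_identity[OF this F_eq F_w0_eq F_w1_eq F_w1_z1_eq K_eq[of w, folded cw_def] K1_eq K0_eq sat_empty_eq C_eq[of w, folded cw_def] C1_eq]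
  show ?thesis .
qed

theorem mainTheorem6:
  fixes x y w u z v :: "'a::field_char_0"
  assumes "y \<noteq> 0" and "w \<noteq> 1" and "y + z \<noteq> 0"
  defines "r \<equiv> fps_const (u + x - x * u) * fps_X"
  shows "(1 - (r * fps_const y - 1) * fps_const (inverse (y * (1 - w)))) * Fgf x y w u z v
   = fps_const (x * y * z * v) * fps_X ^ 2
       * (fps_const (y ^ 2 * u * w * v * (1 - z)) * fps_X + fps_const z * (fps_const y - fps_const y * r + 1))
       * inverse ((1 - fps_const (y * u) * fps_X) * (1 - fps_const (y * u * v * w) * fps_X)
                  * (fps_const y - fps_const (y * z) * r + fps_const z))
     - fps_X * fps_const x * fps_const (inverse (1 - w)) * Fgf x (w * y) 1 u z v
     + (fps_const (u * x) * fps_X + fps_const (inverse y) - fps_const u * fps_X)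
       * (fps_const (w * y * (1 - z)) + fps_const z * (fps_const y - fps_const y * r + 1))
       * inverse (fps_const (1 - w) * (fps_const y - fps_const (y * z) * r + fps_const z))
       * Fgf x y 1 u z v
     + fps_const (y ^ 2 * u ^ 2 * v * z * (1 - v)) * fps_X ^ 2
       * (fps_const (u * x) * fps_X + fps_const (inverse y) - fps_const u * fps_X)
       * inverse (1 - fps_const (y * u) * fps_X)
       * (fps_const (y ^ 2 * u * v * w * (1 - z)) * fps_X + fps_const z * (fps_const y - fps_const y * r + 1))
       * inverse ((1 - fps_const (y * u * v * w) * fps_X) * (fps_const y - fps_const (y * z) * r + fps_const z))
       * Fgf x y 1 u 1 v"
proof -
  let ?P1 = "1 - fps_const (y * u) * fps_X" and ?P2 = "1 - fps_const (y * u * v * w) * fps_X"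
    and ?D = "fps_const y - fps_const (y * z) * r + fps_const z"
  have units: "(1 - fps_const y * fps_const u * fps_X) * inverse ?P1 = 1"
    "(1 - fps_const y * fps_const u * fps_const v * fps_const w * fps_X) * inverse ?P2 = 1"
    "(fps_const y - fps_const y * fps_const z * r + fps_const z) * inverse ?D = 1"
    using assms(3) by (simp_all add: inverse_mult_eq_1' r_def fps_const_mult[symmetric] del: fps_const_mult)
  have unit_y: "fps_const y * fps_const (inverse y) = 1"
    using assms(1) by simp
  have unit_w: "(1 - fps_const w) * fps_const (inverse (1 - w)) = 1"
    using assms(2) by (simp flip: fps_const_1_eq_1)
  show ?thesis
    using cleared_identity_quotient[OF Fgf_cleared_identity[where x = x and y = y and w = w and u = u
        and z = z and v = v, folded r_def] units unit_y unit_w]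
    unfolding fps_inverse_mult fps_const_inverse inverse_mult_distrib
    \<comment> \<open>split every constant into products of \<open>fps_const\<close>s of the variables, so that both sides
      are polynomials in the same atoms\<close>
    unfolding r_def fps_const_mult[symmetric] fps_const_add[symmetric] fps_const_sub[symmetric]
      fps_const_power[symmetric] fps_const_1_eq_1
    by algebra
qed

end
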